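(* Let $A$ be a $B$-module algebra and $V$ a $B$-equivariant $A$-bimodule. Let $J_n(A,B,V)=\sum_{b\in B}{\rm im}\big([L_b,\partial_{n+1}]:{\rm CH}_{n+1}(A,V)\to{\rm CH}_n(A,V)\big)$. Then $J_*(A,B,V)$ is both a differential graded $k$-submodule and a graded $B$-submodule (for the diagonal action $L$) of ${\rm CH}_*(A,V)$, and the quotient ${\rm QCH}_*(A,B,V):={\rm CH}_*(A,V)/J_*(A,B,V)$ is a differential graded $B$-module, i.e. the induced differential on it is $B$-linear.
   Context: $k$ is a field, all tensor products are over $k$, and $B$ is a bialgebra over $k$ with Sweedler notation $\Delta(b)=b_{(1)}\otimes b_{(2)}$ and counit $\varepsilon$. A $B$-module algebra is an associative $k$-algebra $A$ which is a left $B$-module with $b(a_1a_2)=b_{(1)}(a_1)b_{(2)}(a_2)$. A $B$-equivariant $A$-bimodule is an $A$-bimodule $V$ which is a left $B$-module with $b(av)=b_{(1)}(a)b_{(2)}(v)$ and $b(va)=b_{(1)}(v)b_{(2)}(a)$. The Hochschild complex ${\rm CH}_*(A,V)$ has ${\rm CH}_n(A,V)=A^{\otimes n}\otimes V$ with face maps $\partial_j$, $0\le j\le n$: $\partial_j(a_1\otimes\cdots\otimes a_n\otimes v)=(\cdots\otimes a_{j+1}a_{j+2}\otimes\cdots\otimes v)$ for $0\le j<n-1$, $\partial_{n-1}(\ldots)=a_1\otimes\cdots\otimes a_{n-1}\otimes a_nv$, $\partial_n(\ldots)=a_2\otimes\cdots\otimes a_n\otimes va_1$, and $d^{\rm CH}_n=\sum_{j=0}^n(-1)^j\partial_j$.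 $B$ acts diagonally: $L_b(a_1\otimes\cdots\otimes a_n\otimes v)=b_{(1)}(a_1)\otimes\cdots\otimes b_{(n)}(a_n)\otimes b_{(n+1)}(v)$; $[L_b,\partial_{n+1}]=L_b\partial_{n+1}-\partial_{n+1}L_b$. *)

theory Defs
  imports Complex_Main "HOL-Library.Function_Algebras"
begin

text \<open>An element of the free k-vector space on a type 'x is represented by a finitely
supported function 'x => 'k.  Tensor products are the free vector space on tuples
(lists) modulo the subspace spanned by the multilinearity relations; we work with
representatives and the relation subspace explicitly.\<close>

definition fsupp :: "('x \<Rightarrow> 'k::zero) \<Rightarrow> 'x set" where
  "fsupp f = {x. f x \<noteq> 0}"

definition fsingle :: "'x \<Rightarrow> 'x \<Rightarrow> 'k::{zero,one}" where
  "fsingle z = (\<lambda>w. if w = z then 1 else 0)"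

definition fsc :: "'k::times \<Rightarrow> ('x \<Rightarrow> 'k) \<Rightarrow> ('x \<Rightarrow> 'k)" where
  "fsc c f = (\<lambda>x. c * f x)"

definition lin_ext :: "('k::zero \<Rightarrow> 'y \<Rightarrow> 'y::comm_monoid_add) \<Rightarrow> ('x \<Rightarrow> 'y) \<Rightarrow> ('x \<Rightarrow> 'k) \<Rightarrow> 'y" where
  "lin_ext sc g f = (\<Sum>x\<in>fsupp f. sc (f x) (g x))"

definition tens_rep :: "nat \<Rightarrow> ('x list \<Rightarrow> 'k::zero) set" where
  "tens_rep n = {f. finite (fsupp f) \<and> (\<forall>xs\<in>fsupp f. length xs = n)}"

definition list_rel_gen :: "('k::field \<Rightarrow> 'x::ab_group_add \<Rightarrow> 'x) \<Rightarrow> nat \<Rightarrow> ('x list \<Rightarrow> 'k) set" where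
  "list_rel_gen sc n =
     {fsingle (xs[i := x + y]) - fsingle (xs[i := x]) - fsingle (xs[i := y]) | xs i x y.
        length xs = n \<and> i < n}
   \<union> {fsingle (xs[i := sc c x]) - fsc c (fsingle (xs[i := x])) | xs i c x.
        length xs = n \<and> i < n}"

definition tens_rel :: "('k::field \<Rightarrow> 'x::ab_group_add \<Rightarrow> 'x) \<Rightarrow> nat \<Rightarrow> ('x list \<Rightarrow> 'k) set" where
  "tens_rel sc n = module.span fsc (list_rel_gen sc n)"

definition tcat :: "('x list \<Rightarrow> 'k::field) \<Rightarrow> ('x list \<Rightarrow> 'k) \<Rightarrow> ('x list \<Rightarrow> 'k)" where
  "tcat f g = (\<Sum>xs\<in>fsupp f. \<Sum>ys\<in>fsupp g. fsc (f xs * g ys) (fsingle (xs @ ys)))"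

definition tmul :: "('x::times list \<Rightarrow> 'k::field) \<Rightarrow> ('x list \<Rightarrow> 'k) \<Rightarrow> ('x list \<Rightarrow> 'k)" where
  "tmul f g = (\<Sum>xs\<in>fsupp f. \<Sum>ys\<in>fsupp g. fsc (f xs * g ys) (fsingle (map2 (*) xs ys)))"

text \<open>B is a k-algebra (type 'b, scalar multiplication sB); the coproduct Delta b is given
by a representative in B (x) B (lists of length 2), the counit is eps.\<close>
definition k_algebra :: "('k::field \<Rightarrow> 'a::ring \<Rightarrow> 'a) \<Rightarrow> bool" where
  "k_algebra sc \<longleftrightarrow> vector_space sc \<and>
     (\<forall>c x y. sc c (x * y) = sc c x * y \<and> sc c (x * y) = x * sc c y)"

definition bialgebra :: "('k::field \<Rightarrow> 'b::ring_1 \<Rightarrow> 'b) \<Rightarrow> ('b \<Rightarrow> 'b list \<Rightarrow> 'k) \<Rightarrow> ('b \<Rightarrow> 'k) \<Rightarrow> bool" where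
  "bialgebra sB Delta eps \<longleftrightarrow>
     k_algebra sB \<and>
     (\<forall>b. Delta b \<in> tens_rep 2) \<and>
     \<comment> \<open>Delta is k-linear (as a map into B (x) B)\<close>
     (\<forall>b b'. Delta (b + b') - (Delta b + Delta b') \<in> tens_rel sB 2) \<and>
     (\<forall>c b. Delta (sB c b) - fsc c (Delta b) \<in> tens_rel sB 2) \<and>
     \<comment> \<open>coassociativity\<close>
     (\<forall>b. lin_ext fsc (\<lambda>xs. tcat (Delta (xs!0)) (fsingle [xs!1])) (Delta b)
          - lin_ext fsc (\<lambda>xs. tcat (fsingle [xs!0]) (Delta (xs!1))) (Delta b) \<in> tens_rel sB 3) \<and>
     \<comment> \<open>eps is k-linear, counit axioms\<close>
     (\<forall>b b'. eps (b + b') = eps b + eps b') \<and> (\<forall>c b. eps (sB c b) = c * eps b) \<and>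
     (\<forall>b. lin_ext sB (\<lambda>xs. sB (eps (xs!0)) (xs!1)) (Delta b) = b) \<and>
     (\<forall>b. lin_ext sB (\<lambda>xs. sB (eps (xs!1)) (xs!0)) (Delta b) = b) \<and>
     \<comment> \<open>Delta and eps are unital algebra maps\<close>
     (\<forall>b b'. Delta (b * b') - tmul (Delta b) (Delta b') \<in> tens_rel sB 2) \<and>
     Delta 1 - fsingle [1, 1] \<in> tens_rel sB 2 \<and>
     (\<forall>b b'. eps (b * b') = eps b * eps b') \<and> eps 1 = 1"

text \<open>Iterated coproduct: iter_cop Delta m b represents Delta^(m+1)(b) = b_(1) (x) ... (x) b_(m+1).\<close>
fun iter_cop :: "('b \<Rightarrow> 'b list \<Rightarrow> 'k::field) \<Rightarrow> nat \<Rightarrow> 'b \<Rightarrow> 'b list \<Rightarrow> 'k" where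
  "iter_cop Delta 0 b = fsingle [b]"
| "iter_cop Delta (Suc m) b =
     lin_ext fsc (\<lambda>xs. tcat (Delta (hd xs)) (fsingle (tl xs))) (iter_cop Delta m b)"

definition left_module :: "('k::field \<Rightarrow> 'b::ring_1 \<Rightarrow> 'b) \<Rightarrow> ('k \<Rightarrow> 'm::ab_group_add \<Rightarrow> 'm)
    \<Rightarrow> ('b \<Rightarrow> 'm \<Rightarrow> 'm) \<Rightarrow> bool" where
  "left_module sB sM act \<longleftrightarrow> vector_space sM \<and>
     (\<forall>b b' m. act (b + b') m = act b m + act b' m) \<and>
     (\<forall>c b m. act (sB c b) m = sM c (act b m)) \<and>
     (\<forall>b m m'. act b (m + m') = act b m + act b m') \<and>
     (\<forall>c b m. act b (sM c m) = sM c (act b m)) \<and>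
     (\<forall>m. act 1 m = m) \<and>
     (\<forall>b b' m. act (b * b') m = act b (act b' m))"

definition module_algebra :: "('k::field \<Rightarrow> 'b::ring_1 \<Rightarrow> 'b) \<Rightarrow> ('b \<Rightarrow> 'b list \<Rightarrow> 'k)
    \<Rightarrow> ('k \<Rightarrow> 'a::ring \<Rightarrow> 'a) \<Rightarrow> ('b \<Rightarrow> 'a \<Rightarrow> 'a) \<Rightarrow> bool" where
  "module_algebra sB Delta sA actA \<longleftrightarrow> k_algebra sA \<and> left_module sB sA actA \<and>
     (\<forall>b a1 a2. actA b (a1 * a2) = lin_ext sA (\<lambda>xs. actA (xs!0) a1 * actA (xs!1) a2) (Delta b))"

definition bimodule :: "('k::field \<Rightarrow> 'a::ring \<Rightarrow> 'a) \<Rightarrow> ('k \<Rightarrow> 'v::ab_group_add \<Rightarrow> 'v)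
    \<Rightarrow> ('a \<Rightarrow> 'v \<Rightarrow> 'v) \<Rightarrow> ('v \<Rightarrow> 'a \<Rightarrow> 'v) \<Rightarrow> bool" where
  "bimodule sA sV lA rA \<longleftrightarrow> vector_space sV \<and>
     (\<forall>a a' v. lA (a + a') v = lA a v + lA a' v) \<and>
     (\<forall>a v v'. lA a (v + v') = lA a v + lA a v') \<and>
     (\<forall>c a v. lA (sA c a) v = sV c (lA a v)) \<and>
     (\<forall>c a v. lA a (sV c v) = sV c (lA a v)) \<and>
     (\<forall>a a' v. rA v (a + a') = rA v a + rA v a') \<and>
     (\<forall>a v v'. rA (v + v') a = rA v a + rA v' a) \<and>
     (\<forall>c a v. rA v (sA c a) = sV c (rA v a)) \<and>
     (\<forall>c a v. rA (sV c v) a = sV c (rA v a)) \<and>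
     (\<forall>a a' v. lA (a * a') v = lA a (lA a' v)) \<and>
     (\<forall>a a' v. rA v (a * a') = rA (rA v a) a') \<and>
     (\<forall>a a' v. lA a (rA v a') = rA (lA a v) a')"

definition equivariant_bimodule :: "('k::field \<Rightarrow> 'b::ring_1 \<Rightarrow> 'b) \<Rightarrow> ('b \<Rightarrow> 'b list \<Rightarrow> 'k)
    \<Rightarrow> ('k \<Rightarrow> 'a::ring \<Rightarrow> 'a) \<Rightarrow> ('b \<Rightarrow> 'a \<Rightarrow> 'a)
    \<Rightarrow> ('k \<Rightarrow> 'v::ab_group_add \<Rightarrow> 'v) \<Rightarrow> ('a \<Rightarrow> 'v \<Rightarrow> 'v) \<Rightarrow> ('v \<Rightarrow> 'a \<Rightarrow> 'v) \<Rightarrow> ('b \<Rightarrow> 'v \<Rightarrow> 'v) \<Rightarrow> bool" where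
  "equivariant_bimodule sB Delta sA actA sV lA rA actV \<longleftrightarrow>
     bimodule sA sV lA rA \<and> left_module sB sV actV \<and>
     (\<forall>b a v. actV b (lA a v) = lin_ext sV (\<lambda>xs. lA (actA (xs!0) a) (actV (xs!1) v)) (Delta b)) \<and>
     (\<forall>b a v. actV b (rA v a) = lin_ext sV (\<lambda>xs. rA (actV (xs!0) v) (actA (xs!1) a)) (Delta b))"

text \<open>CH_n(A,V) = A^(x)n (x) V: representatives are finitely supported functions on pairs
(a_1..a_n, v) with a list of length n, modulo the multilinearity relations ch_rel n.\<close>
definition ch_rep :: "nat \<Rightarrow> ('a list \<times> 'v \<Rightarrow> 'k::zero) set" where
  "ch_rep n = {f. finite (fsupp f) \<and> (\<forall>p\<in>fsupp f. length (fst p) = n)}"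

definition ch_rel_gen :: "('k::field \<Rightarrow> 'a::ab_group_add \<Rightarrow> 'a) \<Rightarrow> ('k \<Rightarrow> 'v::ab_group_add \<Rightarrow> 'v)
    \<Rightarrow> nat \<Rightarrow> ('a list \<times> 'v \<Rightarrow> 'k) set" where
  "ch_rel_gen sA sV n =
     {fsingle (as[i := x + y], v) - fsingle (as[i := x], v) - fsingle (as[i := y], v) | as i x y v.
        length as = n \<and> i < n}
   \<union> {fsingle (as[i := sA c x], v) - fsc c (fsingle (as[i := x], v)) | as i c x v.
        length as = n \<and> i < n}
   \<union> {fsingle (as, v + w) - fsingle (as, v) - fsingle (as, w) | as v w. length as = n}
   \<union> {fsingle (as, sV c v) - fsc c (fsingle (as, v)) | as c v. length as = n}"

definition ch_rel :: "('k::field \<Rightarrow> 'a::ab_group_add \<Rightarrow> 'a) \<Rightarrow> ('k \<Rightarrow> 'v::ab_group_add \<Rightarrow> 'v)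
    \<Rightarrow> nat \<Rightarrow> ('a list \<times> 'v \<Rightarrow> 'k) set" where
  "ch_rel sA sV n = module.span fsc (ch_rel_gen sA sV n)"

definition face_basis :: "('a \<Rightarrow> 'v \<Rightarrow> 'v) \<Rightarrow> ('v \<Rightarrow> 'a \<Rightarrow> 'v) \<Rightarrow> nat \<Rightarrow> nat
    \<Rightarrow> 'a::times list \<times> 'v \<Rightarrow> 'a list \<times> 'v" where
  "face_basis lA rA n j p = (case p of (as, v) \<Rightarrow>
     if j + 1 < n then (take j as @ [as!j * as!(j+1)] @ drop (j+2) as, v)
     else if j + 1 = n then (butlast as, lA (last as) v)
     else (tl as, rA v (hd as)))"

definition face :: "('a \<Rightarrow> 'v \<Rightarrow> 'v) \<Rightarrow> ('v \<Rightarrow> 'a \<Rightarrow> 'v) \<Rightarrow> nat \<Rightarrow> nat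
    \<Rightarrow> ('a::times list \<times> 'v \<Rightarrow> 'k::field) \<Rightarrow> ('a list \<times> 'v \<Rightarrow> 'k)" where
  "face lA rA n j f = lin_ext fsc (\<lambda>p. fsingle (face_basis lA rA n j p)) f"

definition dCH :: "('a \<Rightarrow> 'v \<Rightarrow> 'v) \<Rightarrow> ('v \<Rightarrow> 'a \<Rightarrow> 'v) \<Rightarrow> nat
    \<Rightarrow> ('a::times list \<times> 'v \<Rightarrow> 'k::field) \<Rightarrow> ('a list \<times> 'v \<Rightarrow> 'k)" where
  "dCH lA rA n f = (\<Sum>j\<le>n. fsc ((-1) ^ j) (face lA rA n j f))"

definition Lact :: "('b \<Rightarrow> 'b list \<Rightarrow> 'k::field) \<Rightarrow> ('b \<Rightarrow> 'a \<Rightarrow> 'a) \<Rightarrow> ('b \<Rightarrow> 'v \<Rightarrow> 'v)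
    \<Rightarrow> nat \<Rightarrow> 'b \<Rightarrow> ('a list \<times> 'v \<Rightarrow> 'k) \<Rightarrow> ('a list \<times> 'v \<Rightarrow> 'k)" where
  "Lact Delta actA actV n b f =
     lin_ext fsc (\<lambda>(as, v). lin_ext fsc
        (\<lambda>bs. fsingle (map2 actA (take n bs) as, actV (bs!n) v)) (iter_cop Delta n b)) f"

definition commL :: "('b \<Rightarrow> 'b list \<Rightarrow> 'k::field) \<Rightarrow> ('b \<Rightarrow> 'a::times \<Rightarrow> 'a) \<Rightarrow> ('b \<Rightarrow> 'v \<Rightarrow> 'v)
    \<Rightarrow> ('a \<Rightarrow> 'v \<Rightarrow> 'v) \<Rightarrow> ('v \<Rightarrow> 'a \<Rightarrow> 'v)
    \<Rightarrow> nat \<Rightarrow> 'b \<Rightarrow> ('a list \<times> 'v \<Rightarrow> 'k) \<Rightarrow> ('a list \<times> 'v \<Rightarrow> 'k)" where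
  "commL Delta actA actV lA rA n b f =
     Lact Delta actA actV n b (face lA rA (n+1) (n+1) f)
     - face lA rA (n+1) (n+1) (Lact Delta actA actV (n+1) b f)"

text \<open>J_n(A,B,V) = sum over b of im [L_b, partial_(n+1)], given as its preimage in the
space of representatives (i.e. including the relation subspace ch_rel n).\<close>
definition Jsub :: "('k::field \<Rightarrow> 'a::ring \<Rightarrow> 'a) \<Rightarrow> ('k \<Rightarrow> 'v::ab_group_add \<Rightarrow> 'v)
    \<Rightarrow> ('b \<Rightarrow> 'b list \<Rightarrow> 'k) \<Rightarrow> ('b \<Rightarrow> 'a \<Rightarrow> 'a) \<Rightarrow> ('b \<Rightarrow> 'v \<Rightarrow> 'v)
    \<Rightarrow> ('a \<Rightarrow> 'v \<Rightarrow> 'v) \<Rightarrow> ('v \<Rightarrow> 'a \<Rightarrow> 'v) \<Rightarrow> nat \<Rightarrow> ('a list \<times> 'v \<Rightarrow> 'k) set" where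
  "Jsub sA sV Delta actA actV lA rA n =
     module.span fsc ({commL Delta actA actV lA rA n b f | b f. f \<in> ch_rep (Suc n)}
                      \<union> ch_rel sA sV n)"

end

(*
  Everything is computed on representatives, finitely supported functions on lists of tensor
  factors, so every identity below holds modulo the multilinearity relations.

  Two facts about the diagonal action L_b carry the argument.  L_b L_b' = L_(bb'), because the
  coproduct is multiplicative.  And every face map except the last one commutes with L_b: for the
  faces multiplying two neighbours a_j a_(j+1) this is the B-equivariance of the product of A, for
  the face a_n v it is the equivariance of the left action, in both cases combined with
  coassociativity of the iterated coproduct.  Only the last face, v a_1, which carries a_1 from the
  front to the back, fails to commute, and J collects exactly this defect [L_b, d_(n+1)].

  Hence d L_b - L_b d = sum_j (-1)^j [d_j, L_b] is congruent to -[L_b, d_(n+1)] and lies in J;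
  L_b [L_b', d] = [L_(bb'), d] - [L_b, d] L_b' puts L_b J into J; and the simplicial identities
  d_j d_(n+2) = d_(n+1) d_(j+1) (j <= n) and d_(n+1) d_(n+2) = d_(n+1) d_0 rewrite every face of a
  generator [L_b, d_(n+2)] f as a combination of generators of J_n and relations.
*)

theory Submission
  imports Defs
begin

section \<open>Finitely supported functions and linear maps\<close>

interpretation fs: module "fsc :: 'k::field \<Rightarrow> ('x \<Rightarrow> 'k) \<Rightarrow> ('x \<Rightarrow> 'k)"
  by unfold_locales (auto simp: fsc_def fun_eq_iff algebra_simps)

abbreviation fin :: "('x \<Rightarrow> 'k::zero) \<Rightarrow> bool" where
  "fin f \<equiv> finite (fsupp f)"

lemma fsc_apply: "fsc c f x = c * f x"
  by (simp add: fsc_def)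

lemma fsupp_fsingle [simp]: "fsupp (fsingle z :: 'x \<Rightarrow> 'k::field) = {z}"
  by (auto simp: fsupp_def fsingle_def)

lemma fsc_0_left [simp]: "fsc 0 (f :: 'x \<Rightarrow> 'k::field) = 0"
  and fsc_0_right [simp]: "fsc (c::'k::field) (0 :: 'x \<Rightarrow> 'k) = 0"
  and fsc_1 [simp]: "fsc 1 (f :: 'x \<Rightarrow> 'k::field) = f"
  by (simp_all add: fsc_def fun_eq_iff)

lemma fsupp_add: "fsupp (f + g) \<subseteq> fsupp f \<union> fsupp (g :: 'x \<Rightarrow> 'k::monoid_add)"
  by (auto simp: fsupp_def)

lemma fsupp_fsc: "fsupp (fsc c f :: 'x \<Rightarrow> 'k::field) \<subseteq> fsupp f"
  by (auto simp: fsupp_def fsc_def)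

lemma supported_subspace: "fs.subspace {f :: 'x \<Rightarrow> 'k::field. fin f \<and> fsupp f \<subseteq> X}"
  unfolding fs.subspace_def
proof (intro conjI ballI allI)
  show "0 \<in> {f :: 'x \<Rightarrow> 'k. fin f \<and> fsupp f \<subseteq> X}"
    by (simp add: fsupp_def)
next
  fix f g :: "'x \<Rightarrow> 'k" and c
  assume "f \<in> {f. fin f \<and> fsupp f \<subseteq> X}" "g \<in> {f. fin f \<and> fsupp f \<subseteq> X}"
  then show "f + g \<in> {f. fin f \<and> fsupp f \<subseteq> X}" "fsc c f \<in> {f. fin f \<and> fsupp f \<subseteq> X}"
    using fsupp_add[of f g] fsupp_fsc[of c f] by (auto intro: finite_subset)
qed

lemma fin_subspace: "fs.subspace {f :: 'x \<Rightarrow> 'k::field. fin f}"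
  using supported_subspace[where X = UNIV] by simp

lemma fin_add: "fin f \<Longrightarrow> fin g \<Longrightarrow> fin (f + g :: 'x \<Rightarrow> 'k::field)"
  by (rule fs.subspace_add[OF fin_subspace, simplified])

lemma fin_diff: "fin f \<Longrightarrow> fin g \<Longrightarrow> fin (f - g :: 'x \<Rightarrow> 'k::field)"
  by (rule fs.subspace_diff[OF fin_subspace, simplified])

lemma fin_fsc: "fin f \<Longrightarrow> fin (fsc c f :: 'x \<Rightarrow> 'k::field)"
  by (rule fs.subspace_scale[OF fin_subspace, simplified])

lemma fin_sum: "(\<And>i. i \<in> A \<Longrightarrow> fin (g i)) \<Longrightarrow> fin (\<Sum>i\<in>A. g i :: 'x \<Rightarrow> 'k::field)"
  by (rule fs.subspace_sum[OF fin_subspace, simplified])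

lemma fin_zero [simp]: "fin (0 :: 'x \<Rightarrow> 'k::zero)"
  by (simp add: fsupp_def)

lemma fin_lin_ext:
  "(\<And>x. x \<in> fsupp f \<Longrightarrow> fin (g x)) \<Longrightarrow> fin (lin_ext fsc g (f :: 'y \<Rightarrow> 'k::field) :: 'x \<Rightarrow> 'k)"
  unfolding lin_ext_def by (intro fin_sum fin_fsc) auto

lemma lin_ext_superset:
  assumes "finite S" "fsupp f \<subseteq> S" "\<And>y. sc 0 y = 0"
  shows "lin_ext sc g f = (\<Sum>x\<in>S. sc (f x) (g x))"
  unfolding lin_ext_def
  by (rule sum.mono_neutral_left) (use assms in \<open>auto simp: fsupp_def\<close>)

lemma lin_ext_add:
  assumes "fin f" "fin g"
  shows "lin_ext fsc h (f + g) = lin_ext fsc h f + lin_ext fsc h (g :: 'y \<Rightarrow> 'k::field)"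
proof -
  let ?S = "fsupp f \<union> fsupp g"
  have "fsupp (f + g) \<subseteq> ?S" by (rule fsupp_add)
  then have "lin_ext fsc h (f + g) = (\<Sum>x\<in>?S. fsc ((f + g) x) (h x))"
    using assms by (intro lin_ext_superset) auto
  also have "\<dots> = (\<Sum>x\<in>?S. fsc (f x) (h x)) + (\<Sum>x\<in>?S. fsc (g x) (h x))"
    by (simp add: fs.scale_left_distrib sum.distrib)
  also have "\<dots> = lin_ext fsc h f + lin_ext fsc h g"
    using assms by (subst (1 2) lin_ext_superset[where S = ?S]) auto
  finally show ?thesis .
qed

lemma lin_ext_fsc: "lin_ext fsc h (fsc c f) = fsc c (lin_ext fsc h (f :: 'y \<Rightarrow> 'k::field))"
proof (cases "c = 0")
  case True
  then have "fsc c f = 0" by simp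
  then show ?thesis using True by (simp add: lin_ext_def fsupp_def)
next
  case False
  then have "fsupp (fsc c f) = fsupp f" by (auto simp: fsupp_def fsc_def)
  then show ?thesis by (simp add: lin_ext_def fs.scale_sum_right fsc_apply)
qed

lemma lin_ext_zero [simp]: "lin_ext sc h 0 = 0"
  by (simp add: lin_ext_def fsupp_def)

lemma lin_ext_fsingle [simp]: "lin_ext fsc h (fsingle z :: 'y \<Rightarrow> 'k::field) = h z"
  unfolding lin_ext_def fsupp_fsingle by (simp add: fsingle_def)

lemma lin_ext_cong: "(\<And>x. x \<in> fsupp f \<Longrightarrow> g x = g' x) \<Longrightarrow> lin_ext sc g f = lin_ext sc g' f"
  unfolding lin_ext_def by (rule sum.cong) auto

lemma lin_ext_diff_fun:
  "lin_ext fsc (\<lambda>x. g x - g' x) f = lin_ext fsc g (f :: 'y \<Rightarrow> 'k::field) - lin_ext fsc g' f"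
  unfolding lin_ext_def by (simp add: fs.scale_right_diff_distrib sum_subtractf)

lemma lin_ext_fsc_fun:
  "lin_ext fsc (\<lambda>x. fsc c (g x)) f = fsc c (lin_ext fsc g (f :: 'y \<Rightarrow> 'k::field))"
  unfolding lin_ext_def by (simp add: fs.scale_sum_right mult.commute)

lemma lin_ext_swap:
  "lin_ext fsc (\<lambda>x. lin_ext fsc (\<lambda>y. h x y) g) f
   = lin_ext fsc (\<lambda>y. lin_ext fsc (\<lambda>x. h x y) (f :: 'a \<Rightarrow> 'k::field)) (g :: 'b \<Rightarrow> 'k)"
  unfolding lin_ext_def by (simp add: fs.scale_sum_right mult.commute sum.swap[of _ "fsupp f"])

lemma lin_ext_in_subspace:
  assumes "fs.subspace S" "\<And>x. x \<in> fsupp f \<Longrightarrow> g x \<in> S"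
  shows "lin_ext fsc g (f :: 'y \<Rightarrow> 'k::field) \<in> S"
  unfolding lin_ext_def using assms by (intro fs.subspace_sum fs.subspace_scale) auto

lemma sum_fun_apply: "(\<Sum>i\<in>A. g i) x = (\<Sum>i\<in>A. (g i :: 'x \<Rightarrow> 'k::comm_monoid_add) x)"
  by (induction A rule: infinite_finite_induct) auto

lemma fsingle_decomp:
  assumes "fin f"
  shows "f = lin_ext fsc fsingle (f :: 'x \<Rightarrow> 'k::field)"
proof
  fix y
  have "lin_ext fsc fsingle f y = (\<Sum>x\<in>fsupp f. if y = x then f x else 0)"
    unfolding lin_ext_def sum_fun_apply by (rule sum.cong) (auto simp: fsc_def fsingle_def)
  also have "\<dots> = f y"
    using assms by (simp add: fsupp_def)
  finally show "f y = lin_ext fsc fsingle f y" by simp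
qed

text \<open>Linearity is only demanded on finitely supported arguments, the only ones that represent
  tensors.\<close>

definition fin_linear :: "(('x \<Rightarrow> 'k::field) \<Rightarrow> ('y \<Rightarrow> 'k)) \<Rightarrow> bool" where
  "fin_linear T \<longleftrightarrow> (\<forall>f g. fin f \<longrightarrow> fin g \<longrightarrow> T (f + g) = T f + T g)
     \<and> (\<forall>c f. fin f \<longrightarrow> T (fsc c f) = fsc c (T f)) \<and> (\<forall>f. fin f \<longrightarrow> fin (T f))"

lemma fin_linearD:
  assumes "fin_linear T" "fin f"
  shows "fin g \<Longrightarrow> T (f + g) = T f + T g" "T (fsc c f) = fsc c (T f)" "fin (T f)"
  using assms unfolding fin_linear_def by auto

lemma fin_linear_lin_ext: "(\<And>x. fin (g x)) \<Longrightarrow> fin_linear (lin_ext fsc g)"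
  unfolding fin_linear_def by (auto simp: lin_ext_add lin_ext_fsc intro: fin_lin_ext)

lemma fin_linear_id: "fin_linear (\<lambda>f. f)"
  by (simp add: fin_linear_def)

lemma fin_linear_zero: "fin_linear T \<Longrightarrow> T 0 = 0"
  using fin_linearD(2)[of T 0 0] by simp

lemma fin_linear_diff:
  assumes "fin_linear T" "fin f" "fin g"
  shows "T (f - g) = T f - T g"
proof -
  have "f - g = f + fsc (-1) g"
    by (simp add: fsc_def fun_eq_iff)
  then have "T (f - g) = T (f + fsc (-1) g)"
    by simp
  also have "\<dots> = T f + fsc (-1) (T g)"
    using fin_linearD[OF assms(1)] assms(2,3) fin_fsc by metis
  also have "\<dots> = T f - T g"
    by (simp add: fsc_def fun_eq_iff)
  finally show ?thesis .
qed

lemma fin_linear_sum: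
  assumes "fin_linear T" "\<And>i. i \<in> A \<Longrightarrow> fin (g i)"
  shows "T (\<Sum>i\<in>A. g i) = (\<Sum>i\<in>A. T (g i))"
  using assms(2)
proof (induction A rule: infinite_finite_induct)
  case (insert x F)
  have "T (\<Sum>i\<in>insert x F. g i) = T (g x + (\<Sum>i\<in>F. g i))"
    by (simp only: sum.insert[OF insert(1,2)])
  also have "\<dots> = T (g x) + (\<Sum>i\<in>F. T (g i))"
    using insert by (simp add: fin_linearD(1)[OF assms(1)] fin_sum)
  also have "\<dots> = (\<Sum>i\<in>insert x F. T (g i))"
    by (simp only: sum.insert[OF insert(1,2)])
  finally show ?case .
qed (simp_all add: fin_linear_zero[OF assms(1)])

lemma fin_linear_comp: "fin_linear T \<Longrightarrow> fin_linear U \<Longrightarrow> fin_linear (\<lambda>f. T (U f))"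
  unfolding fin_linear_def by auto

lemma fin_linear_diff_op: "fin_linear T \<Longrightarrow> fin_linear U \<Longrightarrow> fin_linear (\<lambda>f. T f - U f)"
  unfolding fin_linear_def by (auto simp: fs.scale_right_diff_distrib intro: fin_diff)

lemma fin_linear_lin_combination:
  assumes "\<And>i. i \<in> A \<Longrightarrow> fin_linear (T i)"
  shows "fin_linear (\<lambda>f. \<Sum>i\<in>A. fsc (c i) (T i f))"
  using assms unfolding fin_linear_def
  by (auto simp: sum.distrib fs.scale_right_distrib fs.scale_sum_right mult.commute
      intro!: fin_sum fin_fsc)

lemma fin_linear_lin_ext_comp:
  assumes "fin_linear T" "\<And>x. fin (g x)" "fin f"
  shows "T (lin_ext fsc g f) = lin_ext fsc (\<lambda>x. T (g x)) f"
  using assms by (simp add: lin_ext_def fin_linear_sum fin_fsc fin_linearD(2))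

lemma fin_linear_decomp:
  assumes "fin_linear T" "fin f"
  shows "T f = lin_ext fsc (\<lambda>x. T (fsingle x)) f"
  using fin_linear_lin_ext_comp[OF assms(1) _ assms(2), of fsingle] fsingle_decomp[OF assms(2)]
  by simp

lemma fin_linear_eqI:
  assumes "fin_linear T" "fin_linear U" "fin f" "\<And>x. x \<in> fsupp f \<Longrightarrow> T (fsingle x) = U (fsingle x)"
  shows "T f = U f"
proof -
  have "T f = lin_ext fsc (\<lambda>x. T (fsingle x)) f" by (rule fin_linear_decomp[OF assms(1,3)])
  also have "\<dots> = lin_ext fsc (\<lambda>x. U (fsingle x)) f" by (rule lin_ext_cong) (rule assms(4))
  also have "\<dots> = U f" by (rule fin_linear_decomp[OF assms(2,3), symmetric])
  finally show ?thesis .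
qed

lemma fin_linear_in_subspace:
  assumes "fin_linear T" "fin f" "fs.subspace S" "\<And>x. x \<in> fsupp f \<Longrightarrow> T (fsingle x) \<in> S"
  shows "T f \<in> S"
  using fin_linear_decomp[OF assms(1,2)] lin_ext_in_subspace[OF assms(3)] assms(4) by metis

lemma fin_linear_span_image:
  assumes "fin_linear T" "fs.subspace S" "\<And>g. g \<in> G \<Longrightarrow> fin g \<and> T g \<in> S" "x \<in> fs.span G"
  shows "fin x \<and> T x \<in> S"
  using assms(4)
proof (induction rule: fs.span_induct_alt)
  case base
  have "T 0 = 0" by (rule fin_linear_zero[OF assms(1)])
  then show ?case using fs.subspace_0[OF assms(2)] fin_zero by metis
next
  case (step c x y)
  then show ?case
    using assms(3)[OF step(1)] fin_linearD[OF assms(1)] fin_fsc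
      fs.subspace_add[OF assms(2)] fs.subspace_scale[OF assms(2)]
    by (metis fin_add)
qed

definition linear_mod :: "('k::field \<Rightarrow> 'y::ab_group_add \<Rightarrow> 'y) \<Rightarrow> ('y \<Rightarrow> ('x \<Rightarrow> 'k))
    \<Rightarrow> ('x \<Rightarrow> 'k) set \<Rightarrow> bool" where
  "linear_mod sc \<phi> S \<longleftrightarrow>
     (\<forall>x y. \<phi> (x + y) - \<phi> x - \<phi> y \<in> S) \<and> (\<forall>c x. \<phi> (sc c x) - fsc c (\<phi> x) \<in> S)"

lemma linear_modI:
  "(\<And>x y. \<phi> (x + y) - \<phi> x - \<phi> y \<in> S) \<Longrightarrow> (\<And>c x. \<phi> (sc c x) - fsc c (\<phi> x) \<in> S)
    \<Longrightarrow> linear_mod sc \<phi> S"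
  by (simp add: linear_mod_def)

lemma linear_mod_comp:
  assumes "linear_mod sc2 \<phi> S" "\<And>x y. h (x + y) = h x + h y" "\<And>c x. h (sc1 c x) = sc2 c (h x)"
  shows "linear_mod sc1 (\<lambda>x. \<phi> (h x)) S"
  using assms unfolding linear_mod_def by simp

lemma linear_mod_lin_ext:
  assumes "linear_mod sc \<phi> S" "fs.subspace S"
  shows "lin_ext fsc (\<lambda>x. \<phi> (h x)) f - \<phi> (lin_ext sc h f) \<in> S"
proof -
  have "\<phi> 0 \<in> S"
  proof -
    have "- (\<phi> (0 + 0) - \<phi> 0 - \<phi> 0) \<in> S"
      using assms fs.subspace_neg unfolding linear_mod_def by blast
    then show ?thesis by simp
  qed
  moreover have "\<phi> (a + b) - (fsc c (\<phi> x) + s) \<in> S"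
    if "\<phi> a - fsc c (\<phi> x) \<in> S" "\<phi> b - s \<in> S" for a b c x s
  proof -
    have "\<phi> (a + b) - (fsc c (\<phi> x) + s)
        = (\<phi> (a + b) - \<phi> a - \<phi> b) + (\<phi> a - fsc c (\<phi> x)) + (\<phi> b - s)" by simp
    then show ?thesis
      using assms that unfolding linear_mod_def by (metis fs.subspace_add)
  qed
  ultimately have "\<phi> (\<Sum>x\<in>A. sc (f x) (h x)) - (\<Sum>x\<in>A. fsc (f x) (\<phi> (h x))) \<in> S" for A
    using assms(1) unfolding linear_mod_def
    by (induction A rule: infinite_finite_induct) simp_all
  from fs.subspace_neg[OF assms(2) this] show ?thesis
    by (simp add: lin_ext_def)
qed

lemma linear_mod_lin_ext_family:
  assumes "\<And>y. y \<in> fsupp t \<Longrightarrow> linear_mod sc (\<phi> y) S" "fs.subspace S"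
  shows "linear_mod sc (\<lambda>z. lin_ext fsc (\<lambda>y. \<phi> y z) (t :: 'u \<Rightarrow> 'k::field)) S"
  using assms
  by (intro linear_modI)
    (simp_all only: lin_ext_diff_fun[symmetric] lin_ext_fsc_fun[symmetric] linear_mod_def
      lin_ext_in_subspace)

lemma linear_mod_fin_subspace: "(\<And>z. fin (\<phi> z)) \<Longrightarrow> linear_mod sc \<phi> {f :: 'x \<Rightarrow> 'k::field. fin f}"
  by (simp add: linear_mod_def fin_diff fin_fsc)

lemma fin_linear_relation_image:
  assumes "fin_linear T" "linear_mod sc (\<lambda>z. T (fsingle (\<phi> z))) S"
  shows "T (fsingle (\<phi> (x + y)) - fsingle (\<phi> x) - fsingle (\<phi> y)) \<in> S"
    and "T (fsingle (\<phi> (sc c x)) - fsc c (fsingle (\<phi> x))) \<in> S"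
  using assms unfolding linear_mod_def
  by (simp_all add: fin_linear_diff[OF assms(1)] fin_diff fin_fsc fin_linearD(2)[OF assms(1)])


section \<open>Representatives of tensors and Hochschild chains\<close>

lemma tens_rep_eq: "tens_rep n = {f. fin f \<and> fsupp f \<subseteq> {xs. length xs = n}}"
  by (auto simp: tens_rep_def)

lemma tens_rep_subspace: "fs.subspace (tens_rep n :: ('x list \<Rightarrow> 'k::field) set)"
  unfolding tens_rep_eq by (rule supported_subspace)

lemma fin_tens_rep: "t \<in> tens_rep n \<Longrightarrow> fin t"
  and length_tens_rep: "t \<in> tens_rep n \<Longrightarrow> xs \<in> fsupp t \<Longrightarrow> length xs = n"
  by (simp_all add: tens_rep_def)

lemma fsingle_tens_rep: "length xs = n \<Longrightarrow> (fsingle xs :: 'x list \<Rightarrow> 'k::field) \<in> tens_rep n"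
  by (simp add: tens_rep_def)

lemma tens_rel_subspace: "fs.subspace (tens_rel sc n)"
  unfolding tens_rel_def by (rule fs.subspace_span)

lemma tens_rel_image:
  fixes T :: "('x::ab_group_add list \<Rightarrow> 'k::field) \<Rightarrow> ('y \<Rightarrow> 'k)"
  assumes "fin_linear T" "fs.subspace S"
    and slot: "\<And>xs i. length xs = n \<Longrightarrow> i < n \<Longrightarrow> linear_mod sc (\<lambda>z. T (fsingle (xs[i := z]))) S"
    and "t \<in> tens_rel sc n"
  shows "T t \<in> S"
proof -
  have fin_rel: "fin (fsingle a - fsingle b - fsingle c :: _ \<Rightarrow> 'k)" "fin (fsingle a - fsc d (fsingle b) :: _ \<Rightarrow> 'k)"
    for a b c d by (simp_all add: fin_diff fin_fsc)
  have "fin g \<and> T g \<in> S" if "g \<in> list_rel_gen sc n" for g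
    using that unfolding list_rel_gen_def
    by (elim UnE CollectE exE conjE) (simp_all add: fin_rel fin_linear_relation_image[OF assms(1) slot])
  then show ?thesis
    using fin_linear_span_image[OF assms(1,2)] assms(4) unfolding tens_rel_def by blast
qed

lemma linear_mod_tens_slot:
  assumes "length xs = n" "i < n"
  shows "linear_mod sc (\<lambda>z. fsingle (xs[i := z])) (tens_rel sc n)"
proof (rule linear_modI)
  fix x y c z
  have "fsingle (xs[i := x + y]) - fsingle (xs[i := x]) - fsingle (xs[i := y]) \<in> list_rel_gen sc n"
    and "fsingle (xs[i := sc c z]) - fsc c (fsingle (xs[i := z])) \<in> list_rel_gen sc n"
    unfolding list_rel_gen_def using assms by blast+
  then show "fsingle (xs[i := x + y]) - fsingle (xs[i := x]) - fsingle (xs[i := y]) \<in> tens_rel sc n"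
    and "fsingle (xs[i := sc c z]) - fsc c (fsingle (xs[i := z])) \<in> tens_rel sc n"
    unfolding tens_rel_def by (blast intro: fs.span_base)+
qed

definition pad :: "'x list \<Rightarrow> 'x list \<Rightarrow> ('x list \<Rightarrow> 'k::field) \<Rightarrow> ('x list \<Rightarrow> 'k)" where
  "pad pre post t = lin_ext fsc (\<lambda>ys. fsingle (pre @ ys @ post)) t"

lemma fin_linear_pad: "fin_linear (pad pre post)"
  unfolding pad_def[abs_def] by (rule fin_linear_lin_ext) simp

lemma fin_pad: "fin t \<Longrightarrow> fin (pad pre post t)"
  by (rule fin_linearD(3)[OF fin_linear_pad])

lemma pad_fsingle [simp]: "pad pre post (fsingle ys) = fsingle (pre @ ys @ post)"
  by (simp add: pad_def)

lemma pad_tens_rel: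
  assumes "t \<in> tens_rel sc k" "m = length pre + k + length post"
  shows "pad pre post t \<in> tens_rel sc m"
proof (rule tens_rel_image[OF fin_linear_pad tens_rel_subspace _ assms(1)])
  fix xs :: "'a list" and i
  assume xs: "length xs = k" "i < k"
  have "linear_mod sc (\<lambda>z. fsingle ((pre @ xs @ post)[length pre + i := z])) (tens_rel sc m)"
    using xs assms(2) by (intro linear_mod_tens_slot) auto
  moreover have "(pre @ xs @ post)[length pre + i := z] = pre @ xs[i := z] @ post" for z
    using xs by (simp add: list_update_append)
  ultimately show "linear_mod sc (\<lambda>z. pad pre post (fsingle (xs[i := z]))) (tens_rel sc m)"
    by simp
qed

lemma pad_tens_rep:
  assumes "t \<in> tens_rep k" "m = length pre + k + length post"
  shows "pad pre post t \<in> tens_rep m"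
  unfolding pad_def using assms
  by (intro lin_ext_in_subspace tens_rep_subspace fsingle_tens_rep) (auto dest: length_tens_rep)

lemma pad_pad: "fin t \<Longrightarrow> pad p1 q1 (pad p2 q2 t) = pad (p1 @ p2) (q2 @ q1) t"
  unfolding pad_def[of p2 q2]
  by (simp add: fin_linear_lin_ext_comp[OF fin_linear_pad] pad_def[of "p1 @ p2"])

lemma tcat_fsingle_right: "tcat f (fsingle ys) = pad [] ys f"
  and tcat_fsingle_left: "tcat (fsingle xs) g = pad xs [] g"
  unfolding tcat_def pad_def lin_ext_def fsupp_fsingle by (simp_all add: fsingle_def)

lemma ch_rep_eq: "ch_rep n = {f. fin f \<and> fsupp f \<subseteq> {p. length (fst p) = n}}"
  by (auto simp: ch_rep_def)

lemma ch_rep_subspace: "fs.subspace (ch_rep n :: ('a list \<times> 'v \<Rightarrow> 'k::field) set)"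
  unfolding ch_rep_eq by (rule supported_subspace)

lemma fin_ch_rep: "t \<in> ch_rep n \<Longrightarrow> fin t"
  and length_ch_rep: "t \<in> ch_rep n \<Longrightarrow> p \<in> fsupp t \<Longrightarrow> length (fst p) = n"
  by (simp_all add: ch_rep_def)

lemma fsingle_ch_rep: "length as = n \<Longrightarrow> (fsingle (as, v) :: 'a list \<times> 'v \<Rightarrow> 'k::field) \<in> ch_rep n"
  by (simp add: ch_rep_def)

lemma ch_rel_subspace: "fs.subspace (ch_rel sA sV n)"
  unfolding ch_rel_def by (rule fs.subspace_span)

lemma ch_rel_image:
  fixes T :: "('a::ab_group_add list \<times> 'v::ab_group_add \<Rightarrow> 'k::field) \<Rightarrow> ('y \<Rightarrow> 'k)"
  assumes "fin_linear T" "fs.subspace S"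
    and slot: "\<And>as i v. length as = n \<Longrightarrow> i < n \<Longrightarrow> linear_mod sA (\<lambda>z. T (fsingle (as[i := z], v))) S"
    and coeff: "\<And>as. length as = n \<Longrightarrow> linear_mod sV (\<lambda>w. T (fsingle (as, w))) S"
    and "t \<in> ch_rel sA sV n"
  shows "T t \<in> S"
proof -
  have fin_rel: "fin (fsingle a - fsingle b - fsingle c :: _ \<Rightarrow> 'k)" "fin (fsingle a - fsc d (fsingle b) :: _ \<Rightarrow> 'k)"
    for a b c d by (simp_all add: fin_diff fin_fsc)
  have "fin g \<and> T g \<in> S" if "g \<in> ch_rel_gen sA sV n" for g
    using that unfolding ch_rel_gen_def
    by (elim UnE CollectE exE conjE)
      (simp_all add: fin_rel fin_linear_relation_image[OF assms(1) slot]
        fin_linear_relation_image[OF assms(1) coeff])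
  then show ?thesis
    using fin_linear_span_image[OF assms(1,2)] assms(5) unfolding ch_rel_def by blast
qed

lemma fin_ch_rel: "t \<in> ch_rel sA sV n \<Longrightarrow> fin t"
  by (rule ch_rel_image[OF fin_linear_id fin_subspace, simplified])
    (simp_all add: linear_mod_fin_subspace)

lemma ch_rel_slot_add:
  assumes "length as = n" "i < n"
  shows "fsingle (as[i := x + y], v) - fsingle (as[i := x], v) - fsingle (as[i := y], v) \<in> ch_rel sA sV n"
  unfolding ch_rel_def ch_rel_gen_def
  by (rule fs.span_base, rule UnI1, rule UnI1, rule UnI1, rule CollectI, rule exI[of _ as], rule exI[of _ i],
      rule exI[of _ x], rule exI[of _ y], rule exI[of _ v]) (simp add: assms)

lemma ch_rel_slot_scale:
  assumes "length as = n" "i < n"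
  shows "fsingle (as[i := sA c x], v) - fsc c (fsingle (as[i := x], v)) \<in> ch_rel sA sV n"
  unfolding ch_rel_def ch_rel_gen_def
  by (rule fs.span_base, rule UnI1, rule UnI1, rule UnI2, rule CollectI, rule exI[of _ as], rule exI[of _ i],
      rule exI[of _ c], rule exI[of _ x], rule exI[of _ v]) (simp add: assms)

lemma ch_rel_coeff_add:
  assumes "length as = n"
  shows "fsingle (as, v + w) - fsingle (as, v) - fsingle (as, w) \<in> ch_rel sA sV n"
  unfolding ch_rel_def ch_rel_gen_def
  by (rule fs.span_base, rule UnI1, rule UnI2, rule CollectI, rule exI[of _ as], rule exI[of _ v],
      rule exI[of _ w]) (simp add: assms)

lemma ch_rel_coeff_scale:
  assumes "length as = n"
  shows "fsingle (as, sV c v) - fsc c (fsingle (as, v)) \<in> ch_rel sA sV n"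
  unfolding ch_rel_def ch_rel_gen_def
  by (rule fs.span_base, rule UnI2, rule CollectI, rule exI[of _ as], rule exI[of _ c],
      rule exI[of _ v]) (simp add: assms)

lemma linear_mod_ch_slot:
  assumes "length as = n" "i < n" "\<And>x y. h (x + y) = h x + h y" "\<And>c x. h (sc c x) = sA c (h x)"
  shows "linear_mod sc (\<lambda>z. fsingle (as[i := h z], v)) (ch_rel sA sV n)"
proof -
  have "linear_mod sA (\<lambda>z. fsingle (as[i := z], v)) (ch_rel sA sV n)"
    using ch_rel_slot_add[OF assms(1,2)] ch_rel_slot_scale[OF assms(1,2)] by (rule linear_modI)
  from linear_mod_comp[where h = h, OF this assms(3,4)] show ?thesis .
qed

lemma linear_mod_ch_coeff:
  assumes "length as = n" "\<And>x y. h (x + y) = h x + h y" "\<And>c x. h (sc c x) = sV c (h x)"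
  shows "linear_mod sc (\<lambda>z. fsingle (as, h z)) (ch_rel sA sV n)"
proof -
  have "linear_mod sV (\<lambda>w. fsingle (as, w)) (ch_rel sA sV n)"
    using ch_rel_coeff_add[OF assms(1)] ch_rel_coeff_scale[OF assms(1)] by (rule linear_modI)
  from linear_mod_comp[where h = h, OF this assms(2,3)] show ?thesis .
qed


section \<open>Iterated coproducts\<close>

declare iter_cop.simps(2) [simp del]

locale equivariant_setting =
  fixes sB :: "'k::field \<Rightarrow> 'b::ring_1 \<Rightarrow> 'b"
    and Delta :: "'b \<Rightarrow> 'b list \<Rightarrow> 'k"
    and eps :: "'b \<Rightarrow> 'k"
    and sA :: "'k \<Rightarrow> 'a::ring \<Rightarrow> 'a"
    and actA :: "'b \<Rightarrow> 'a \<Rightarrow> 'a"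
    and sV :: "'k \<Rightarrow> 'v::ab_group_add \<Rightarrow> 'v"
    and lA :: "'a \<Rightarrow> 'v \<Rightarrow> 'v"
    and rA :: "'v \<Rightarrow> 'a \<Rightarrow> 'v"
    and actV :: "'b \<Rightarrow> 'v \<Rightarrow> 'v"
  assumes bialgebra: "bialgebra sB Delta eps"
    and module_algebra: "module_algebra sB Delta sA actA"
    and equivariant_bimodule: "equivariant_bimodule sB Delta sA actA sV lA rA actV"
begin

lemma Delta_tens_rep: "Delta b \<in> tens_rep 2"
  and Delta_add: "Delta (b + b') - (Delta b + Delta b') \<in> tens_rel sB 2"
  and Delta_scale: "Delta (sB c b) - fsc c (Delta b) \<in> tens_rel sB 2"
  and Delta_coassoc: "lin_ext fsc (\<lambda>xs. tcat (Delta (xs!0)) (fsingle [xs!1])) (Delta b)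
          - lin_ext fsc (\<lambda>xs. tcat (fsingle [xs!0]) (Delta (xs!1))) (Delta b) \<in> tens_rel sB 3"
  and Delta_mult: "Delta (b * b') - tmul (Delta b) (Delta b') \<in> tens_rel sB 2"
  using bialgebra by (simp_all add: bialgebra_def)

lemma fin_Delta: "fin (Delta b)"
  using Delta_tens_rep by (rule fin_tens_rep)

lemma length_Delta: "ys \<in> fsupp (Delta b) \<Longrightarrow> length ys = 2"
  using Delta_tens_rep by (rule length_tens_rep)

lemma Delta_support: "ys \<in> fsupp (Delta b) \<Longrightarrow> \<exists>y0 y1. ys = [y0, y1]"
  by (drule length_Delta) (cases ys; cases "tl ys"; simp)

lemma actA_add: "actA (b + b') m = actA b m + actA b' m" "actA b (m + m') = actA b m + actA b m'"
  and actA_scale: "actA (sB c b) m = sA c (actA b m)" "actA b (sA c m) = sA c (actA b m)"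
  and actA_mult: "actA (b * b') m = actA b (actA b' m)"
  and actA_times: "actA b (a1 * a2) = lin_ext sA (\<lambda>xs. actA (xs!0) a1 * actA (xs!1) a2) (Delta b)"
  using module_algebra by (simp_all add: module_algebra_def left_module_def)

lemma actV_add: "actV (b + b') m = actV b m + actV b' m" "actV b (m + m') = actV b m + actV b m'"
  and actV_scale: "actV (sB c b) m = sV c (actV b m)" "actV b (sV c m) = sV c (actV b m)"
  and actV_mult: "actV (b * b') m = actV b (actV b' m)"
  and actV_lA: "actV b (lA a v) = lin_ext sV (\<lambda>xs. lA (actA (xs!0) a) (actV (xs!1) v)) (Delta b)"
  using equivariant_bimodule by (simp_all add: equivariant_bimodule_def left_module_def)

lemma sA_mult: "sA c (x * y) = sA c x * y" "sA c (x * y) = x * sA c y"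
  using module_algebra unfolding module_algebra_def k_algebra_def by blast+

lemma lA_add: "lA (a + a') v = lA a v + lA a' v" "lA a (v + v') = lA a v + lA a v'"
  and lA_scale: "lA (sA c a) v = sV c (lA a v)" "lA a (sV c v) = sV c (lA a v)"
  and rA_add: "rA v (a + a') = rA v a + rA v a'" "rA (v + v') a = rA v a + rA v' a"
  and rA_scale: "rA v (sA c a) = sV c (rA v a)" "rA (sV c v) a = sV c (rA v a)"
  and rA_mult: "rA v (a * a') = rA (rA v a) a'"
  and lA_rA: "lA a (rA v a') = rA (lA a v) a'"
  using equivariant_bimodule by (simp_all add: equivariant_bimodule_def bimodule_def)

definition cop_at :: "nat \<Rightarrow> ('b list \<Rightarrow> 'k) \<Rightarrow> ('b list \<Rightarrow> 'k)" where
  "cop_at j t = lin_ext fsc (\<lambda>bs. pad (take j bs) (drop (Suc j) bs) (Delta (bs!j))) t"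

lemma fin_linear_cop_at: "fin_linear (cop_at j)"
  unfolding cop_at_def[abs_def] by (rule fin_linear_lin_ext) (intro fin_pad fin_Delta)

lemma fin_cop_at: "fin t \<Longrightarrow> fin (cop_at j t)"
  by (rule fin_linearD(3)[OF fin_linear_cop_at])

lemma cop_at_fsingle: "cop_at j (fsingle bs) = pad (take j bs) (drop (Suc j) bs) (Delta (bs!j))"
  by (simp add: cop_at_def)

lemma cop_at_0_fsingle: "cop_at 0 (fsingle bs) = pad [] (tl bs) (Delta (bs!0))"
  by (simp add: cop_at_fsingle drop_Suc)

lemma cop_at_tens_rep:
  assumes "t \<in> tens_rep n" "j < n"
  shows "cop_at j t \<in> tens_rep (Suc n)"
  unfolding cop_at_def using assms
  by (intro lin_ext_in_subspace tens_rep_subspace pad_tens_rep[OF Delta_tens_rep])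
    (auto dest: length_tens_rep)

lemma cop_at_tens_rel:
  assumes "t \<in> tens_rel sB n" "j < n"
  shows "cop_at j t \<in> tens_rel sB (Suc n)"
proof (rule tens_rel_image[OF fin_linear_cop_at tens_rel_subspace _ assms(1)])
  fix xs :: "'b list" and i
  assume xs: "length xs = n" "i < n"
  let ?pad = "pad (take j xs) (drop (Suc j) xs)"
  show "linear_mod sB (\<lambda>z. cop_at j (fsingle (xs[i := z]))) (tens_rel sB (Suc n))"
  proof (cases "i = j")
    case True
    then have cop: "cop_at j (fsingle (xs[i := z])) = ?pad (Delta z)" for z
      using xs by (simp add: cop_at_fsingle)
    have "?pad (Delta (x + y) - (Delta x + Delta y)) \<in> tens_rel sB (Suc n)"
      and "?pad (Delta (sB c x) - fsc c (Delta x)) \<in> tens_rel sB (Suc n)" for x y c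
      using xs assms(2) by (auto intro!: pad_tens_rel Delta_add Delta_scale)
    then show ?thesis
      unfolding cop
      by (intro linear_modI)
        (simp_all add: fin_linear_diff[OF fin_linear_pad] fin_linearD[OF fin_linear_pad]
          fin_Delta fin_add fin_fsc diff_diff_eq)
  next
    case False
    let ?i = "if i < j then i else Suc i"
    have upd: "take j (xs[i := z]) @ ys @ drop (Suc j) (xs[i := z]) = (take j xs @ ys @ drop (Suc j) xs)[?i := z]"
      if "length ys = 2" for ys z
      using xs assms(2) False that
      by (auto simp: list_update_append take_update_swap drop_update_swap min_def nth_append
          intro!: nth_equalityI)
    have "cop_at j (fsingle (xs[i := z]))
        = lin_ext fsc (\<lambda>ys. fsingle ((take j xs @ ys @ drop (Suc j) xs)[?i := z])) (Delta (xs!j))" for z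
      unfolding cop_at_fsingle pad_def nth_list_update_neq[OF False]
      by (intro lin_ext_cong) (simp add: upd length_Delta)
    then show ?thesis
      using False xs assms(2)
      by (simp only:) (intro linear_mod_lin_ext_family tens_rel_subspace linear_mod_tens_slot;
          auto dest: length_Delta)
  qed
qed

lemma iter_cop_Suc_eq:
  assumes "iter_cop Delta m b \<in> tens_rep (Suc m)"
  shows "iter_cop Delta (Suc m) b = cop_at 0 (iter_cop Delta m b)"
  unfolding iter_cop.simps cop_at_def
proof (rule lin_ext_cong)
  fix xs assume "xs \<in> fsupp (iter_cop Delta m b)"
  then have "xs \<noteq> []" using length_tens_rep[OF assms] by fastforce
  then show "tcat (Delta (hd xs)) (fsingle (tl xs)) = pad (take 0 xs) (drop (Suc 0) xs) (Delta (xs ! 0))"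
    by (simp add: tcat_fsingle_right hd_conv_nth drop_Suc)
qed

lemma iter_cop_tens_rep: "iter_cop Delta m b \<in> tens_rep (Suc m)"
proof (induction m)
  case 0
  then show ?case by (simp add: fsingle_tens_rep)
next
  case (Suc m)
  then show ?case using iter_cop_Suc_eq[OF Suc] cop_at_tens_rep[OF Suc] by simp
qed

lemma iter_cop_Suc: "iter_cop Delta (Suc m) b = cop_at 0 (iter_cop Delta m b)"
  by (rule iter_cop_Suc_eq[OF iter_cop_tens_rep])

lemma fin_iter_cop: "fin (iter_cop Delta m b)"
  using iter_cop_tens_rep by (rule fin_tens_rep)

lemma length_iter_cop: "bs \<in> fsupp (iter_cop Delta m b) \<Longrightarrow> length bs = Suc m"
  using iter_cop_tens_rep by (rule length_tens_rep)

lemma cop_at_pad_right: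
  assumes "fin t" "\<And>ys. ys \<in> fsupp t \<Longrightarrow> k < length ys"
  shows "cop_at k (pad [] q t) = pad [] q (cop_at k t)"
proof (rule fin_linear_eqI[OF fin_linear_comp[OF fin_linear_cop_at fin_linear_pad]
      fin_linear_comp[OF fin_linear_pad fin_linear_cop_at] assms(1)])
  fix ys assume "ys \<in> fsupp t"
  then have "k < length ys" by (rule assms(2))
  then show "cop_at k (pad [] q (fsingle ys)) = pad [] q (cop_at k (fsingle ys))"
    by (simp add: cop_at_fsingle pad_pad fin_Delta nth_append)
qed

lemma Delta_coassoc_cop_at: "cop_at 1 (Delta b) - cop_at 0 (Delta b) \<in> tens_rel sB 3"
proof -
  have "cop_at 0 (Delta b) = lin_ext fsc (\<lambda>xs. tcat (Delta (xs!0)) (fsingle [xs!1])) (Delta b)"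
    and "cop_at 1 (Delta b) = lin_ext fsc (\<lambda>xs. tcat (fsingle [xs!0]) (Delta (xs!1))) (Delta b)"
    unfolding cop_at_def
    by (intro lin_ext_cong; auto simp: tcat_fsingle_left tcat_fsingle_right dest!: Delta_support)+
  then show ?thesis
    using fs.subspace_neg[OF tens_rel_subspace Delta_coassoc] by simp
qed

lemma cop_at_coassoc_fsingle:
  assumes "bs \<noteq> []"
  shows "cop_at 1 (cop_at 0 (fsingle bs)) - cop_at 0 (cop_at 0 (fsingle bs))
    \<in> tens_rel sB (Suc (Suc (length bs)))"
proof -
  have "cop_at k (cop_at 0 (fsingle bs)) = pad [] (tl bs) (cop_at k (Delta (bs!0)))" if "k \<le> 1" for k
    using that by (simp add: cop_at_0_fsingle cop_at_pad_right fin_Delta length_Delta)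
  then have "cop_at 1 (cop_at 0 (fsingle bs)) - cop_at 0 (cop_at 0 (fsingle bs))
      = pad [] (tl bs) (cop_at 1 (Delta (bs!0)) - cop_at 0 (Delta (bs!0)))"
    by (simp add: fin_linear_diff[OF fin_linear_pad] fin_cop_at fin_Delta)
  also have "\<dots> \<in> tens_rel sB (Suc (Suc (length bs)))"
    using assms by (intro pad_tens_rel[OF Delta_coassoc_cop_at]) simp
  finally show ?thesis .
qed

lemma cop_at_commute_fsingle:
  assumes "Suc j < length bs"
  shows "cop_at (Suc (Suc j)) (cop_at 0 (fsingle bs)) = cop_at 0 (cop_at (Suc j) (fsingle bs))"
proof -
  obtain b0 bs' where bs: "bs = b0 # bs'" using assms by (cases bs) auto
  let ?pre = "take j bs'" and ?post = "drop (Suc j) bs'"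
  have "cop_at (Suc (Suc j)) (cop_at 0 (fsingle bs))
      = lin_ext fsc (\<lambda>ys. cop_at (Suc (Suc j)) (fsingle (ys @ bs'))) (Delta b0)"
    unfolding cop_at_0_fsingle pad_def
    by (simp add: bs fin_linear_lin_ext_comp[OF fin_linear_cop_at] fin_Delta)
  also have "\<dots> = lin_ext fsc (\<lambda>ys. lin_ext fsc (\<lambda>zs. fsingle (ys @ ?pre @ zs @ ?post)) (Delta (bs'!j))) (Delta b0)"
    by (rule lin_ext_cong) (auto simp: cop_at_fsingle pad_def dest!: Delta_support)
  also have "\<dots> = lin_ext fsc (\<lambda>zs. lin_ext fsc (\<lambda>ys. fsingle (ys @ ?pre @ zs @ ?post)) (Delta b0)) (Delta (bs'!j))"
    by (rule lin_ext_swap)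
  also have "\<dots> = cop_at 0 (cop_at (Suc j) (fsingle bs))"
    unfolding cop_at_fsingle[of "Suc j"] pad_def
    by (simp add: bs fin_linear_lin_ext_comp[OF fin_linear_cop_at] fin_Delta cop_at_0_fsingle pad_def)
  finally show ?thesis .
qed

lemma cop_at_coassoc:
  assumes "t \<in> tens_rep (Suc n)"
  shows "cop_at 1 (cop_at 0 t) - cop_at 0 (cop_at 0 t) \<in> tens_rel sB (Suc (Suc (Suc n)))"
proof (rule fin_linear_in_subspace[where T = "\<lambda>t. cop_at 1 (cop_at 0 t) - cop_at 0 (cop_at 0 t)",
      OF _ fin_tens_rep[OF assms] tens_rel_subspace])
  show "fin_linear (\<lambda>t. cop_at 1 (cop_at 0 t) - cop_at 0 (cop_at 0 t))"
    by (intro fin_linear_diff_op fin_linear_comp[OF fin_linear_cop_at fin_linear_cop_at])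
next
  fix bs assume "bs \<in> fsupp t"
  then have "length bs = Suc n" by (rule length_tens_rep[OF assms])
  moreover from this have "bs \<noteq> []" by auto
  ultimately show "cop_at 1 (cop_at 0 (fsingle bs)) - cop_at 0 (cop_at 0 (fsingle bs))
      \<in> tens_rel sB (Suc (Suc (Suc n)))"
    using cop_at_coassoc_fsingle[of bs] by simp
qed

lemma cop_at_commute:
  assumes "t \<in> tens_rep n" "Suc j < n"
  shows "cop_at (Suc (Suc j)) (cop_at 0 t) = cop_at 0 (cop_at (Suc j) t)"
proof (rule fin_linear_eqI[OF fin_linear_comp[OF fin_linear_cop_at fin_linear_cop_at]
      fin_linear_comp[OF fin_linear_cop_at fin_linear_cop_at] fin_tens_rep[OF assms(1)]])
  fix bs assume "bs \<in> fsupp t"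
  then have "Suc j < length bs" using length_tens_rep[OF assms(1)] assms(2) by simp
  then show "cop_at (Suc (Suc j)) (cop_at 0 (fsingle bs)) = cop_at 0 (cop_at (Suc j) (fsingle bs))"
    by (rule cop_at_commute_fsingle)
qed

lemma iter_cop_coassoc:
  "j \<le> m \<Longrightarrow> cop_at j (iter_cop Delta m b) - iter_cop Delta (Suc m) b \<in> tens_rel sB (Suc (Suc m))"
proof (induction j arbitrary: m)
  case 0
  show ?case using fs.subspace_0[OF tens_rel_subspace] by (simp only: iter_cop_Suc diff_self)
next
  case (Suc j)
  then obtain m' where m: "m = Suc m'" by (cases m) auto
  let ?t = "iter_cop Delta m' b"
  have iter_m: "iter_cop Delta m b = cop_at 0 ?t" "iter_cop Delta (Suc m) b = cop_at 0 (cop_at 0 ?t)"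
    by (simp_all only: m iter_cop_Suc)
  show ?case
  proof (cases j)
    case 0
    from cop_at_coassoc[OF iter_cop_tens_rep, of m' b] show ?thesis
      by (simp only: 0 m iter_cop_Suc One_nat_def)
  next
    case (Suc j')
    have "cop_at (Suc j) (cop_at 0 ?t) = cop_at 0 (cop_at j ?t)"
      unfolding Suc using Suc.prems m Suc by (intro cop_at_commute[OF iter_cop_tens_rep]) simp
    then have "cop_at (Suc j) (iter_cop Delta m b) - iter_cop Delta (Suc m) b
        = cop_at 0 (cop_at j ?t - iter_cop Delta (Suc m') b)"
      unfolding iter_m iter_cop_Suc
      by (simp only: fin_linear_diff[OF fin_linear_cop_at fin_cop_at fin_cop_at] fin_iter_cop)
    also have "\<dots> \<in> tens_rel sB (Suc (Suc m))"
    proof -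
      have "j \<le> m'" using Suc.prems m by simp
      then show ?thesis unfolding m by (rule cop_at_tens_rel[OF Suc.IH]) simp
    qed
    finally show ?thesis .
  qed
qed

lemma tmul_lin_ext:
  "tmul f g = lin_ext fsc (\<lambda>xs. lin_ext fsc (\<lambda>ys. fsingle (map2 (*) xs ys)) g) f"
  unfolding tmul_def lin_ext_def by (simp add: fs.scale_sum_right flip: fs.scale_scale)

lemma fin_linear_tmul_left: "fin_linear (\<lambda>f. tmul f g)"
  unfolding tmul_lin_ext by (intro fin_linear_lin_ext fin_lin_ext) simp

lemma fin_linear_tmul_right: "fin_linear (\<lambda>g. tmul f g)"
  unfolding tmul_lin_ext lin_ext_swap[of _ _ f] by (intro fin_linear_lin_ext fin_lin_ext) simp

lemma fin_tmul: "fin (tmul f g)"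
  unfolding tmul_lin_ext by (intro fin_lin_ext) simp

lemma tmul_fsingle: "tmul (fsingle xs) (fsingle ys) = fsingle (map2 (*) xs ys)"
  by (simp add: tmul_lin_ext)

lemma tmul_pad_right:
  assumes "fin D1" "fin D2" "\<And>ws. ws \<in> fsupp D1 \<Longrightarrow> length ws = 2" "\<And>us. us \<in> fsupp D2 \<Longrightarrow> length us = 2"
  shows "tmul (pad [] p D1) (pad [] q D2) = pad [] (map2 (*) p q) (tmul D1 D2)"
proof -
  have "tmul (pad [] p D1) (pad [] q D2) = lin_ext fsc (\<lambda>ws. tmul (fsingle (ws @ p)) (pad [] q D2)) D1"
    unfolding pad_def[of "[]" p] by (simp add: fin_linear_lin_ext_comp[OF fin_linear_tmul_left] assms)
  also have "\<dots> = lin_ext fsc (\<lambda>ws. lin_ext fsc (\<lambda>us. fsingle (map2 (*) (ws @ p) (us @ q))) D2) D1"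
    unfolding pad_def[of "[]" q]
    by (simp add: fin_linear_lin_ext_comp[OF fin_linear_tmul_right] assms tmul_fsingle)
  also have "\<dots> = lin_ext fsc (\<lambda>ws. lin_ext fsc (\<lambda>us. fsingle (map2 (*) ws us @ map2 (*) p q)) D2) D1"
    using assms(3,4) by (intro lin_ext_cong) simp
  also have "\<dots> = lin_ext fsc (\<lambda>ws. pad [] (map2 (*) p q) (lin_ext fsc (\<lambda>us. fsingle (map2 (*) ws us)) D2)) D1"
    by (simp add: fin_linear_lin_ext_comp[OF fin_linear_pad] assms)
  also have "\<dots> = pad [] (map2 (*) p q) (tmul D1 D2)"
    unfolding tmul_lin_ext
    by (rule fin_linear_lin_ext_comp[OF fin_linear_pad, symmetric]) (simp_all add: fin_lin_ext assms)
  finally show ?thesis .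
qed

lemma cop_at_0_tmul_fsingle:
  assumes "length xs = Suc n" "length ys = Suc n"
  shows "cop_at 0 (tmul (fsingle xs) (fsingle ys)) - tmul (cop_at 0 (fsingle xs)) (cop_at 0 (fsingle ys))
    \<in> tens_rel sB (Suc (Suc n))"
proof -
  let ?q = "map2 (*) (tl xs) (tl ys)"
  have "cop_at 0 (tmul (fsingle xs) (fsingle ys)) = pad [] ?q (Delta (xs!0 * ys!0))"
    using assms by (cases xs; cases ys) (simp_all add: tmul_fsingle cop_at_0_fsingle)
  moreover have "tmul (cop_at 0 (fsingle xs)) (cop_at 0 (fsingle ys)) = pad [] ?q (tmul (Delta (xs!0)) (Delta (ys!0)))"
    unfolding cop_at_0_fsingle by (rule tmul_pad_right) (auto simp: fin_Delta length_Delta)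
  moreover have "pad [] ?q (Delta (xs!0 * ys!0) - tmul (Delta (xs!0)) (Delta (ys!0))) \<in> tens_rel sB (Suc (Suc n))"
    using assms by (intro pad_tens_rel[OF Delta_mult]) simp
  ultimately show ?thesis
    by (simp add: fin_linear_diff[OF fin_linear_pad] fin_Delta fin_tmul)
qed

lemma cop_at_0_tmul:
  assumes "f \<in> tens_rep (Suc n)" "g \<in> tens_rep (Suc n)"
  shows "cop_at 0 (tmul f g) - tmul (cop_at 0 f) (cop_at 0 g) \<in> tens_rel sB (Suc (Suc n))"
proof (rule fin_linear_in_subspace[where T = "\<lambda>f. cop_at 0 (tmul f g) - tmul (cop_at 0 f) (cop_at 0 g)",
      OF _ fin_tens_rep[OF assms(1)] tens_rel_subspace])
  show "fin_linear (\<lambda>f. cop_at 0 (tmul f g) - tmul (cop_at 0 f) (cop_at 0 g))"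
    by (intro fin_linear_diff_op fin_linear_comp[OF fin_linear_cop_at fin_linear_tmul_left]
        fin_linear_comp[OF fin_linear_tmul_left fin_linear_cop_at])
next
  fix xs assume xs: "xs \<in> fsupp f"
  show "cop_at 0 (tmul (fsingle xs) g) - tmul (cop_at 0 (fsingle xs)) (cop_at 0 g) \<in> tens_rel sB (Suc (Suc n))"
  proof (rule fin_linear_in_subspace[where T = "\<lambda>g. cop_at 0 (tmul (fsingle xs) g) - tmul (cop_at 0 (fsingle xs)) (cop_at 0 g)",
        OF _ fin_tens_rep[OF assms(2)] tens_rel_subspace])
    show "fin_linear (\<lambda>g. cop_at 0 (tmul (fsingle xs) g) - tmul (cop_at 0 (fsingle xs)) (cop_at 0 g))"
      by (intro fin_linear_diff_op fin_linear_comp[OF fin_linear_cop_at fin_linear_tmul_right]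
          fin_linear_comp[OF fin_linear_tmul_right fin_linear_cop_at])
  qed (rule cop_at_0_tmul_fsingle[OF length_tens_rep[OF assms(1) xs] length_tens_rep[OF assms(2)]])
qed

lemma iter_cop_mult:
  "iter_cop Delta n (b * b') - tmul (iter_cop Delta n b) (iter_cop Delta n b') \<in> tens_rel sB (Suc n)"
proof (induction n)
  case 0
  have "tmul (iter_cop Delta 0 b) (iter_cop Delta 0 b') = iter_cop Delta 0 (b * b')"
    by (simp add: tmul_fsingle)
  then show ?case using fs.subspace_0[OF tens_rel_subspace] by (simp only: diff_self)
next
  case (Suc n)
  let ?t = "iter_cop Delta n"
  have "cop_at 0 (?t (b * b') - tmul (?t b) (?t b')) \<in> tens_rel sB (Suc (Suc n))"
    by (rule cop_at_tens_rel[OF Suc.IH]) simp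
  moreover have "cop_at 0 (tmul (?t b) (?t b')) - tmul (cop_at 0 (?t b)) (cop_at 0 (?t b'))
      \<in> tens_rel sB (Suc (Suc n))"
    by (rule cop_at_0_tmul[OF iter_cop_tens_rep iter_cop_tens_rep])
  moreover have "iter_cop Delta (Suc n) (b * b') - tmul (iter_cop Delta (Suc n) b) (iter_cop Delta (Suc n) b')
      = cop_at 0 (?t (b * b') - tmul (?t b) (?t b'))
        + (cop_at 0 (tmul (?t b) (?t b')) - tmul (cop_at 0 (?t b)) (cop_at 0 (?t b')))"
    by (simp add: iter_cop_Suc fin_linear_diff[OF fin_linear_cop_at] fin_iter_cop fin_tmul)
  ultimately show ?case
    by (metis fs.subspace_add[OF tens_rel_subspace])
qed

end


section \<open>Face maps\<close>

definition merge_at :: "nat \<Rightarrow> 'a::times list \<Rightarrow> 'a list" where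
  "merge_at j as = take j as @ [as!j * as!Suc j] @ drop (Suc (Suc j)) as"

lemma length_merge_at: "Suc j < length as \<Longrightarrow> length (merge_at j as) = length as - 1"
  by (simp add: merge_at_def)

lemma merge_at_update_before: "Suc j < length as \<Longrightarrow> i < j \<Longrightarrow> merge_at j (as[i := z]) = (merge_at j as)[i := z]"
  and merge_at_update_left: "Suc j < length as \<Longrightarrow> merge_at j (as[j := z]) = (merge_at j as)[j := z * as!Suc j]"
  and merge_at_update_right: "Suc j < length as \<Longrightarrow> merge_at j (as[Suc j := z]) = (merge_at j as)[j := as!j * z]"
  and merge_at_update_after:
    "Suc j < i \<Longrightarrow> i < length as \<Longrightarrow> merge_at j (as[i := z]) = (merge_at j as)[i - 1 := z]"
  by (rule nth_equalityI; auto simp: merge_at_def nth_append nth_list_update nth_Cons')+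

lemma face_basis_merge: "Suc j < n \<Longrightarrow> face_basis lA rA n j (as, v) = (merge_at j as, v)"
  and face_basis_left: "Suc j = n \<Longrightarrow> face_basis lA rA n j (as, v) = (butlast as, lA (last as) v)"
  and face_basis_right: "n \<le> j \<Longrightarrow> face_basis lA rA n j (as, v) = (tl as, rA v (hd as))"
  by (simp_all add: face_basis_def merge_at_def)

lemma fin_linear_face: "fin_linear (face lA rA n j)"
  unfolding face_def[abs_def] by (rule fin_linear_lin_ext) simp

lemma fin_face: "fin t \<Longrightarrow> fin (face lA rA n j t)"
  by (rule fin_linearD(3)[OF fin_linear_face])

lemma face_fsingle [simp]: "face lA rA n j (fsingle p) = fsingle (face_basis lA rA n j p)"
  by (simp add: face_def)

lemma face_ch_rep: "t \<in> ch_rep n \<Longrightarrow> face lA rA n j t \<in> ch_rep (n - 1)"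
  unfolding face_def
  by (intro lin_ext_in_subspace ch_rep_subspace)
    (auto simp: ch_rep_def face_basis_def dest: length_ch_rep split: prod.splits)

lemma fin_linear_dCH: "fin_linear (dCH lA rA n)"
  unfolding dCH_def[abs_def] by (rule fin_linear_lin_combination) (rule fin_linear_face)

lemma fin_linear_in_ch_rep:
  assumes "fin_linear T" "f \<in> ch_rep n" "fs.subspace S"
    and "\<And>as v. length as = n \<Longrightarrow> T (fsingle (as, v)) \<in> S"
  shows "T f \<in> S"
proof (rule fin_linear_in_subspace[OF assms(1) fin_ch_rep[OF assms(2)] assms(3)])
  fix p assume "p \<in> fsupp f"
  then show "T (fsingle p) \<in> S"
    using length_ch_rep[OF assms(2)] assms(4) by (cases p) auto
qed

lemma fin_linear_eq_ch_rep:
  assumes "fin_linear T" "fin_linear U" "f \<in> ch_rep n"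
    and "\<And>as v. length as = n \<Longrightarrow> T (fsingle (as, v)) = U (fsingle (as, v))"
  shows "T f = U f"
proof (rule fin_linear_eqI[OF assms(1,2) fin_ch_rep[OF assms(3)]])
  fix p assume "p \<in> fsupp f"
  then show "T (fsingle p) = U (fsingle p)"
    using length_ch_rep[OF assms(3)] assms(4) by (cases p) auto
qed

context equivariant_setting
begin

abbreviation L :: "nat \<Rightarrow> 'b \<Rightarrow> ('a list \<times> 'v \<Rightarrow> 'k) \<Rightarrow> ('a list \<times> 'v \<Rightarrow> 'k)" where
  "L n b \<equiv> Lact Delta actA actV n b"

abbreviation \<delta> :: "nat \<Rightarrow> nat \<Rightarrow> ('a list \<times> 'v \<Rightarrow> 'k) \<Rightarrow> ('a list \<times> 'v \<Rightarrow> 'k)" where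
  "\<delta> n j \<equiv> face lA rA n j"

lemma linear_mod_face_slot_merge:
  assumes "length as = n" "i < n" "Suc j < n"
  shows "linear_mod sA (\<lambda>z. fsingle (face_basis lA rA n j (as[i := z], v))) (ch_rel sA sV (n - 1))"
proof -
  have len: "length (merge_at j as) = n - 1" using assms by (simp add: length_merge_at)
  consider "i < j" | "i = j" | "i = Suc j" | "Suc j < i" by linarith
  then show ?thesis
  proof cases
    case 1
    have "linear_mod sA (\<lambda>z. fsingle ((merge_at j as)[i := z], v)) (ch_rel sA sV (n - 1))"
      by (rule linear_mod_ch_slot) (use len 1 assms in simp_all)
    then show ?thesis using 1 assms by (simp add: face_basis_merge merge_at_update_before)
  next
    case 2
    have "linear_mod sA (\<lambda>z. fsingle ((merge_at j as)[j := z * as!Suc j], v)) (ch_rel sA sV (n - 1))"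
      by (rule linear_mod_ch_slot) (use len assms in \<open>simp_all add: distrib_right sA_mult(1)\<close>)
    then show ?thesis using 2 assms by (simp add: face_basis_merge merge_at_update_left)
  next
    case 3
    have "linear_mod sA (\<lambda>z. fsingle ((merge_at j as)[j := as!j * z], v)) (ch_rel sA sV (n - 1))"
      by (rule linear_mod_ch_slot) (use len assms in \<open>simp_all add: distrib_left sA_mult(2)\<close>)
    then show ?thesis using 3 assms by (simp add: face_basis_merge merge_at_update_right)
  next
    case 4
    have "linear_mod sA (\<lambda>z. fsingle ((merge_at j as)[i - 1 := z], v)) (ch_rel sA sV (n - 1))"
      by (rule linear_mod_ch_slot) (use len 4 assms in simp_all)
    then show ?thesis using 4 assms by (simp add: face_basis_merge merge_at_update_after)
  qed
qed

lemma linear_mod_face_slot_left: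
  assumes "length as = n" "i < n" "Suc j = n"
  shows "linear_mod sA (\<lambda>z. fsingle (face_basis lA rA n j (as[i := z], v))) (ch_rel sA sV (n - 1))"
proof (cases "i = n - 1")
  case True
  have "linear_mod sA (\<lambda>z. fsingle (butlast as, lA z v)) (ch_rel sA sV (n - 1))"
    by (rule linear_mod_ch_coeff) (use assms in \<open>simp_all add: lA_add lA_scale\<close>)
  moreover have "as \<noteq> []" using assms by auto
  ultimately show ?thesis
    using assms True by (simp add: face_basis_left butlast_list_update last_list_update)
next
  case False
  have "linear_mod sA (\<lambda>z. fsingle ((butlast as)[i := z], lA (last as) v)) (ch_rel sA sV (n - 1))"
    by (rule linear_mod_ch_slot) (use assms False in simp_all)
  moreover have "as \<noteq> []" using assms by auto
  ultimately show ?thesis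
    using assms False by (simp add: face_basis_left butlast_list_update last_list_update)
qed

lemma linear_mod_face_slot_right:
  assumes "length as = n" "i < n" "n \<le> j"
  shows "linear_mod sA (\<lambda>z. fsingle (face_basis lA rA n j (as[i := z], v))) (ch_rel sA sV (n - 1))"
proof -
  obtain a0 as' where as: "as = a0 # as'" using assms by (cases as) auto
  show ?thesis
  proof (cases i)
    case 0
    have "linear_mod sA (\<lambda>z. fsingle (as', rA v z)) (ch_rel sA sV (n - 1))"
      by (rule linear_mod_ch_coeff) (use assms as in \<open>simp_all add: rA_add rA_scale\<close>)
    then show ?thesis using assms 0 by (simp add: face_basis_right as)
  next
    case (Suc i')
    have "linear_mod sA (\<lambda>z. fsingle (as'[i' := z], rA v a0)) (ch_rel sA sV (n - 1))"
      by (rule linear_mod_ch_slot) (use assms as Suc in simp_all)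
    then show ?thesis using assms Suc by (simp add: face_basis_right as)
  qed
qed

lemma linear_mod_face_coeff:
  assumes "length as = n"
  shows "linear_mod sV (\<lambda>w. fsingle (face_basis lA rA n j (as, w))) (ch_rel sA sV (n - 1))"
proof -
  consider "Suc j < n" | "Suc j = n" | "n \<le> j" by linarith
  then show ?thesis
  proof cases
    case 1
    have "linear_mod sV (\<lambda>w. fsingle (merge_at j as, w)) (ch_rel sA sV (n - 1))"
      by (rule linear_mod_ch_coeff) (use 1 assms in \<open>simp_all add: length_merge_at\<close>)
    then show ?thesis using 1 by (simp add: face_basis_merge)
  next
    case 2
    have "linear_mod sV (\<lambda>w. fsingle (butlast as, lA (last as) w)) (ch_rel sA sV (n - 1))"
      by (rule linear_mod_ch_coeff) (use assms in \<open>simp_all add: lA_add lA_scale\<close>)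
    then show ?thesis using 2 by (simp add: face_basis_left)
  next
    case 3
    have "linear_mod sV (\<lambda>w. fsingle (tl as, rA w (hd as))) (ch_rel sA sV (n - 1))"
      by (rule linear_mod_ch_coeff) (use assms in \<open>simp_all add: rA_add rA_scale\<close>)
    then show ?thesis using 3 by (simp add: face_basis_right)
  qed
qed

lemma face_ch_rel: "t \<in> ch_rel sA sV n \<Longrightarrow> \<delta> n j t \<in> ch_rel sA sV (n - 1)"
proof (rule ch_rel_image[OF fin_linear_face ch_rel_subspace])
  fix as :: "'a list" and i v
  assume "length as = n" "i < n"
  then show "linear_mod sA (\<lambda>z. \<delta> n j (fsingle (as[i := z], v))) (ch_rel sA sV (n - 1))"
    using linear_mod_face_slot_merge linear_mod_face_slot_left linear_mod_face_slot_right
    by (cases "Suc j < n"; cases "Suc j = n") auto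
next
  fix as :: "'a list"
  assume "length as = n"
  then show "linear_mod sV (\<lambda>w. \<delta> n j (fsingle (as, w))) (ch_rel sA sV (n - 1))"
    unfolding face_fsingle by (rule linear_mod_face_coeff)
qed

lemma face_face_last:
  assumes "f \<in> ch_rep (Suc (Suc n))" "j \<le> n"
  shows "\<delta> (Suc n) j (\<delta> (Suc (Suc n)) (Suc (Suc n)) f) = \<delta> (Suc n) (Suc n) (\<delta> (Suc (Suc n)) (Suc j) f)"
proof (rule fin_linear_eq_ch_rep[OF fin_linear_comp[OF fin_linear_face fin_linear_face]
      fin_linear_comp[OF fin_linear_face fin_linear_face] assms(1)])
  fix as :: "'a list" and v
  assume "length as = Suc (Suc n)"
  then obtain a0 as' where as: "as = a0 # as'" "length as' = Suc n" by (cases as) auto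
  show "\<delta> (Suc n) j (\<delta> (Suc (Suc n)) (Suc (Suc n)) (fsingle (as, v)))
      = \<delta> (Suc n) (Suc n) (\<delta> (Suc (Suc n)) (Suc j) (fsingle (as, v)))"
  proof (cases "j < n")
    case True
    have "merge_at (Suc j) (a0 # as') = a0 # merge_at j as'" by (simp add: merge_at_def)
    then show ?thesis using True as by (simp add: face_basis_right face_basis_merge)
  next
    case False
    then have "j = n" "as' \<noteq> []" using assms(2) as by auto
    then show ?thesis using as by (simp add: face_basis_right face_basis_left lA_rA)
  qed
qed

lemma face_last_face_last:
  assumes "f \<in> ch_rep (Suc (Suc n))"
  shows "\<delta> (Suc n) (Suc n) (\<delta> (Suc (Suc n)) (Suc (Suc n)) f) = \<delta> (Suc n) (Suc n) (\<delta> (Suc (Suc n)) 0 f)"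
proof (rule fin_linear_eq_ch_rep[OF fin_linear_comp[OF fin_linear_face fin_linear_face]
      fin_linear_comp[OF fin_linear_face fin_linear_face] assms(1)])
  fix as :: "'a list" and v
  assume "length as = Suc (Suc n)"
  then obtain a0 a1 rest where "as = a0 # a1 # rest" by (metis length_Suc_conv)
  then show "\<delta> (Suc n) (Suc n) (\<delta> (Suc (Suc n)) (Suc (Suc n)) (fsingle (as, v)))
      = \<delta> (Suc n) (Suc n) (\<delta> (Suc (Suc n)) 0 (fsingle (as, v)))"
    by (simp add: face_basis_right face_basis_merge merge_at_def rA_mult)
qed

end


section \<open>The diagonal action\<close>

lemma merge_at_map2_insert:
  assumes "length as = Suc k" "length bs = Suc k" "j < k"
  shows "merge_at j (map2 f (take (Suc k) (take j bs @ [y0, y1] @ drop (Suc j) bs)) as)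
       = (map2 f (take k bs) (merge_at j as))[j := f y0 (as!j) * f y1 (as!Suc j)]"
    and "(take j bs @ [y0, y1] @ drop (Suc j) bs) ! Suc k = bs ! k"
  using assms
  by (auto simp: merge_at_def nth_append nth_list_update nth_Cons' min_def intro!: nth_equalityI)

lemma map2_snoc:
  assumes "length as = Suc k" "length bs = Suc k"
  shows "butlast (map2 f (take k bs @ [y]) as) = map2 f (take k bs) (butlast as)"
    and "last (map2 f (take k bs @ [y]) as) = f y (last as)"
proof -
  obtain as' a where "as = as' @ [a]" using assms by (metis length_Suc_conv_rev)
  then show "butlast (map2 f (take k bs @ [y]) as) = map2 f (take k bs) (butlast as)"
    and "last (map2 f (take k bs @ [y]) as) = f y (last as)"
    using assms by auto
qed

context equivariant_setting
begin

definition diag_act :: "nat \<Rightarrow> 'a list \<times> 'v \<Rightarrow> ('b list \<Rightarrow> 'k) \<Rightarrow> ('a list \<times> 'v \<Rightarrow> 'k)" where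
  "diag_act n p t = lin_ext fsc (\<lambda>bs. fsingle (map2 actA (take n bs) (fst p), actV (bs!n) (snd p))) t"

lemma fin_linear_diag_act: "fin_linear (diag_act n p)"
  unfolding diag_act_def[abs_def] by (rule fin_linear_lin_ext) simp

lemma diag_act_fsingle [simp]:
  "diag_act n (as, v) (fsingle bs) = fsingle (map2 actA (take n bs) as, actV (bs!n) v)"
  by (simp add: diag_act_def)

lemma Lact_fsingle: "L n b (fsingle p) = diag_act n p (iter_cop Delta n b)"
  by (cases p) (simp add: Lact_def diag_act_def)

lemma fin_linear_Lact: "fin_linear (L n b)"
  unfolding Lact_def[abs_def] by (rule fin_linear_lin_ext) (auto intro: fin_lin_ext)

lemma fin_Lact: "fin f \<Longrightarrow> fin (L n b f)"
  by (rule fin_linearD(3)[OF fin_linear_Lact])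

lemma Lact_ch_rep: "f \<in> ch_rep n \<Longrightarrow> L n b f \<in> ch_rep n"
  by (rule fin_linear_in_ch_rep[OF fin_linear_Lact _ ch_rep_subspace])
    (auto simp: Lact_fsingle diag_act_def intro!: lin_ext_in_subspace[OF ch_rep_subspace] fsingle_ch_rep
      dest: length_iter_cop)

lemma diag_act_tens_rel:
  assumes "length as = n" "t \<in> tens_rel sB (Suc n)"
  shows "diag_act n (as, v) t \<in> ch_rel sA sV n"
proof (rule tens_rel_image[OF fin_linear_diag_act ch_rel_subspace _ assms(2)])
  fix bs :: "'b list" and i
  assume bs: "length bs = Suc n" "i < Suc n"
  show "linear_mod sB (\<lambda>z. diag_act n (as, v) (fsingle (bs[i := z]))) (ch_rel sA sV n)"
  proof (cases "i < n")
    case True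
    have "linear_mod sB (\<lambda>z. fsingle ((map2 actA (take n bs) as)[i := actA z (as!i)], actV (bs!n) v))
        (ch_rel sA sV n)"
      by (rule linear_mod_ch_slot) (use True bs assms in \<open>simp_all add: actA_add actA_scale\<close>)
    moreover have "map2 actA (take n (bs[i := z])) as = (map2 actA (take n bs) as)[i := actA z (as!i)]" for z
      using True bs assms by (intro nth_equalityI) (auto simp: nth_list_update)
    ultimately show ?thesis
      using True by simp
  next
    case False
    then have "i = n" using bs by simp
    moreover have "linear_mod sB (\<lambda>z. fsingle (map2 actA (take n bs) as, actV z v)) (ch_rel sA sV n)"
      by (rule linear_mod_ch_coeff) (use bs assms in \<open>simp_all add: actV_add actV_scale\<close>)
    ultimately show ?thesis
      using bs by simp
  qed
qed

lemma Lact_ch_rel: "t \<in> ch_rel sA sV n \<Longrightarrow> L n b t \<in> ch_rel sA sV n"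
proof (rule ch_rel_image[OF fin_linear_Lact ch_rel_subspace])
  fix as :: "'a list" and i v
  assume as: "length as = n" "i < n"
  have "map2 actA (take n bs) (as[i := z]) = (map2 actA (take n bs) as)[i := actA (bs!i) z]"
    if "length bs = Suc n" for bs z
    using that as by (intro nth_equalityI) (auto simp: nth_list_update)
  then have "L n b (fsingle (as[i := z], v)) = lin_ext fsc (\<lambda>bs. fsingle ((map2 actA (take n bs) as)[i := actA (bs!i) z],
      actV (bs!n) v)) (iter_cop Delta n b)" for z
    unfolding Lact_fsingle diag_act_def
    by (intro lin_ext_cong) (simp add: length_iter_cop)
  then show "linear_mod sA (\<lambda>z. L n b (fsingle (as[i := z], v))) (ch_rel sA sV n)"
    by (simp only:) (rule linear_mod_lin_ext_family[OF linear_mod_ch_slot ch_rel_subspace];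
        use as in \<open>auto simp add: actA_add actA_scale dest!: length_iter_cop\<close>)
next
  fix as :: "'a list"
  assume as: "length as = n"
  have "L n b (fsingle (as, w)) = lin_ext fsc (\<lambda>bs. fsingle (map2 actA (take n bs) as, actV (bs!n) w))
      (iter_cop Delta n b)" for w
    by (simp add: Lact_fsingle diag_act_def)
  then show "linear_mod sV (\<lambda>w. L n b (fsingle (as, w))) (ch_rel sA sV n)"
    by (simp only:) (rule linear_mod_lin_ext_family[OF linear_mod_ch_coeff ch_rel_subspace];
        use as in \<open>auto simp add: actV_add actV_scale dest!: length_iter_cop\<close>)
qed

lemma face_diag_act_cop_at_fsingle_eq:
  "\<delta> (Suc k) j (diag_act (Suc k) (as, v) (cop_at j (fsingle bs)))
    = lin_ext fsc (\<lambda>ys. \<delta> (Suc k) j (diag_act (Suc k) (as, v) (fsingle (take j bs @ ys @ drop (Suc j) bs))))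
        (Delta (bs!j))"
  unfolding cop_at_fsingle pad_def
  by (rule fin_linear_lin_ext_comp[OF fin_linear_comp[OF fin_linear_face fin_linear_diag_act]])
    (simp_all add: fin_Delta)

lemma face_diag_act_cop_at_fsingle_merge:
  assumes bs: "length bs = Suc k" and as: "length as = Suc k" and "j < k"
  shows "\<delta> (Suc k) j (diag_act (Suc k) (as, v) (cop_at j (fsingle bs)))
    - diag_act k (face_basis lA rA (Suc k) j (as, v)) (fsingle bs) \<in> ch_rel sA sV k"
proof -
  let ?as = "map2 actA (take k bs) (merge_at j as)"
  define \<phi> where "\<phi> z = (fsingle (?as[j := z], actV (bs!k) v) :: 'a list \<times> 'v \<Rightarrow> 'k)" for z
  define h where "h = (\<lambda>ys. actA (ys!0) (as!j) * actA (ys!1) (as!Suc j))"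
  have "linear_mod sA \<phi> (ch_rel sA sV k)"
    unfolding \<phi>_def by (rule linear_mod_ch_slot) (use assms in \<open>simp_all add: length_merge_at\<close>)
  from linear_mod_lin_ext[OF this ch_rel_subspace]
  have rel: "lin_ext fsc (\<lambda>ys. \<phi> (h ys)) (Delta (bs!j)) - \<phi> (lin_ext sA h (Delta (bs!j))) \<in> ch_rel sA sV k" .
  have "lin_ext sA h (Delta (bs!j)) = actA (bs!j) (as!j * as!Suc j)"
    unfolding h_def by (rule actA_times[symmetric])
  also have "\<dots> = ?as ! j"
    using assms by (simp add: merge_at_def nth_append)
  finally have "\<phi> (lin_ext sA h (Delta (bs!j))) = diag_act k (face_basis lA rA (Suc k) j (as, v)) (fsingle bs)"
    using assms by (simp add: \<phi>_def face_basis_merge)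
  moreover have "lin_ext fsc (\<lambda>ys. \<phi> (h ys)) (Delta (bs!j))
      = \<delta> (Suc k) j (diag_act (Suc k) (as, v) (cop_at j (fsingle bs)))"
    unfolding face_diag_act_cop_at_fsingle_eq
  proof (rule lin_ext_cong)
    fix ys assume "ys \<in> fsupp (Delta (bs!j))"
    then obtain y0 y1 where ys: "ys = [y0, y1]" by (blast dest: Delta_support)
    show "\<phi> (h ys) = \<delta> (Suc k) j (diag_act (Suc k) (as, v) (fsingle (take j bs @ ys @ drop (Suc j) bs)))"
      unfolding ys diag_act_fsingle face_fsingle using assms(3)
      by (simp only: face_basis_merge Suc_less_eq merge_at_map2_insert[OF as bs assms(3)] \<phi>_def h_def
          nth_Cons_0 nth_Cons_Suc One_nat_def)
  qed
  ultimately show ?thesis using rel by simp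
qed

lemma face_diag_act_cop_at_fsingle_left:
  assumes bs: "length bs = Suc k" and as: "length as = Suc k"
  shows "\<delta> (Suc k) k (diag_act (Suc k) (as, v) (cop_at k (fsingle bs)))
    - diag_act k (face_basis lA rA (Suc k) k (as, v)) (fsingle bs) \<in> ch_rel sA sV k"
proof -
  define \<phi> where "\<phi> w = (fsingle (map2 actA (take k bs) (butlast as), w) :: 'a list \<times> 'v \<Rightarrow> 'k)" for w
  define h where "h = (\<lambda>ys. lA (actA (ys!0) (last as)) (actV (ys!1) v))"
  have "linear_mod sV \<phi> (ch_rel sA sV k)"
    unfolding \<phi>_def by (rule linear_mod_ch_coeff) (use as bs in simp_all)
  from linear_mod_lin_ext[OF this ch_rel_subspace]
  have "lin_ext fsc (\<lambda>ys. \<phi> (h ys)) (Delta (bs!k)) - \<phi> (lin_ext sV h (Delta (bs!k))) \<in> ch_rel sA sV k" .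
  moreover have "\<phi> (lin_ext sV h (Delta (bs!k))) = diag_act k (face_basis lA rA (Suc k) k (as, v)) (fsingle bs)"
    by (simp add: face_basis_left \<phi>_def h_def actV_lA)
  moreover have "lin_ext fsc (\<lambda>ys. \<phi> (h ys)) (Delta (bs!k))
      = \<delta> (Suc k) k (diag_act (Suc k) (as, v) (cop_at k (fsingle bs)))"
    unfolding face_diag_act_cop_at_fsingle_eq
    by (rule lin_ext_cong)
      (use as bs in \<open>auto simp: face_basis_left map2_snoc nth_append \<phi>_def h_def dest!: Delta_support\<close>)
  ultimately show ?thesis by simp
qed

lemma face_Lact_comm_fsingle:
  assumes as: "length as = Suc k" and "j \<le> k"
  shows "\<delta> (Suc k) j (L (Suc k) b (fsingle (as, v))) - L k b (\<delta> (Suc k) j (fsingle (as, v))) \<in> ch_rel sA sV k"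
proof -
  let ?T = "\<lambda>t. \<delta> (Suc k) j (diag_act (Suc k) (as, v) t)"
  let ?U = "diag_act k (face_basis lA rA (Suc k) j (as, v))"
  have lin_T: "fin_linear ?T"
    by (rule fin_linear_comp[OF fin_linear_face fin_linear_diag_act])
  have "?T (cop_at j (iter_cop Delta k b) - iter_cop Delta (Suc k) b) \<in> ch_rel sA sV k"
    using face_ch_rel[OF diag_act_tens_rel[OF as iter_cop_coassoc[OF assms(2)]]] by simp
  then have "?T (iter_cop Delta (Suc k) b) - ?T (cop_at j (iter_cop Delta k b)) \<in> ch_rel sA sV k"
    using fs.subspace_neg[OF ch_rel_subspace]
    by (fastforce simp: fin_linear_diff[OF lin_T] fin_cop_at fin_iter_cop)
  moreover have "?T (cop_at j (iter_cop Delta k b)) - ?U (iter_cop Delta k b) \<in> ch_rel sA sV k"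
  proof (rule fin_linear_in_subspace[OF fin_linear_diff_op[OF fin_linear_comp[OF lin_T fin_linear_cop_at]
        fin_linear_diag_act] fin_iter_cop ch_rel_subspace])
    fix bs assume "bs \<in> fsupp (iter_cop Delta k b)"
    then have "length bs = Suc k" by (rule length_iter_cop)
    then show "?T (cop_at j (fsingle bs)) - ?U (fsingle bs) \<in> ch_rel sA sV k"
      using face_diag_act_cop_at_fsingle_merge[OF _ as] face_diag_act_cop_at_fsingle_left[OF _ as] assms(2)
      by (cases "j = k") auto
  qed
  ultimately show ?thesis
    using fs.subspace_add[OF ch_rel_subspace] by (fastforce simp: Lact_fsingle)
qed

lemma face_Lact_comm:
  assumes "f \<in> ch_rep (Suc k)" "j \<le> k"
  shows "\<delta> (Suc k) j (L (Suc k) b f) - L k b (\<delta> (Suc k) j f) \<in> ch_rel sA sV k"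
  by (rule fin_linear_in_ch_rep[OF fin_linear_diff_op[OF fin_linear_comp[OF fin_linear_face fin_linear_Lact]
        fin_linear_comp[OF fin_linear_Lact fin_linear_face]] assms(1) ch_rel_subspace])
    (rule face_Lact_comm_fsingle[OF _ assms(2)])

lemma Lact_Lact_fsingle:
  assumes "length as = n"
  shows "L n b (L n b' (fsingle (as, v))) = diag_act n (as, v) (tmul (iter_cop Delta n b) (iter_cop Delta n b'))"
proof -
  have "L n b (L n b' (fsingle (as, v)))
      = lin_ext fsc (\<lambda>bs'. L n b (diag_act n (as, v) (fsingle bs'))) (iter_cop Delta n b')"
    unfolding Lact_fsingle[of n b'] diag_act_def[of n "(as, v)"]
    by (simp add: fin_linear_lin_ext_comp[OF fin_linear_Lact] fin_iter_cop)
  also have "\<dots> = lin_ext fsc (\<lambda>bs'. lin_ext fsc (\<lambda>bs. diag_act n (as, v) (fsingle (map2 (*) bs bs')))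
      (iter_cop Delta n b)) (iter_cop Delta n b')"
  proof (rule lin_ext_cong)
    fix bs' assume "bs' \<in> fsupp (iter_cop Delta n b')"
    then have bs': "length bs' = Suc n" by (rule length_iter_cop)
    have "L n b (diag_act n (as, v) (fsingle bs'))
        = diag_act n (map2 actA (take n bs') as, actV (bs'!n) v) (iter_cop Delta n b)"
      by (simp add: Lact_fsingle)
    also have "\<dots> = lin_ext fsc (\<lambda>bs. diag_act n (as, v) (fsingle (map2 (*) bs bs'))) (iter_cop Delta n b)"
      unfolding diag_act_def[of n "(map2 actA (take n bs') as, actV (bs'!n) v)"]
    proof (rule lin_ext_cong)
      fix bs assume "bs \<in> fsupp (iter_cop Delta n b)"
      then have "length bs = Suc n" by (rule length_iter_cop)
      then have "map2 actA (take n bs) (map2 actA (take n bs') as) = map2 actA (take n (map2 (*) bs bs')) as"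
        using bs' assms by (intro nth_equalityI) (simp_all add: actA_mult)
      then show "fsingle (map2 actA (take n bs) (fst (map2 actA (take n bs') as, actV (bs'!n) v)),
          actV (bs!n) (snd (map2 actA (take n bs') as, actV (bs'!n) v)))
        = diag_act n (as, v) (fsingle (map2 (*) bs bs'))"
        using bs' \<open>length bs = Suc n\<close> by (simp add: actV_mult)
    qed
    finally show "L n b (diag_act n (as, v) (fsingle bs'))
      = lin_ext fsc (\<lambda>bs. diag_act n (as, v) (fsingle (map2 (*) bs bs'))) (iter_cop Delta n b)" .
  qed
  also have "\<dots> = diag_act n (as, v) (tmul (iter_cop Delta n b) (iter_cop Delta n b'))"
    unfolding tmul_lin_ext lin_ext_swap[of _ _ "iter_cop Delta n b"]
    by (simp add: fin_linear_lin_ext_comp[OF fin_linear_diag_act] fin_lin_ext fin_iter_cop)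
  finally show ?thesis .
qed

lemma Lact_Lact:
  assumes "f \<in> ch_rep n"
  shows "L n b (L n b' f) - L n (b * b') f \<in> ch_rel sA sV n"
proof (rule fin_linear_in_ch_rep[OF fin_linear_diff_op[OF fin_linear_comp[OF fin_linear_Lact fin_linear_Lact]
      fin_linear_Lact] assms ch_rel_subspace])
  fix as :: "'a list" and v
  assume as: "length as = n"
  have "diag_act n (as, v) (iter_cop Delta n (b * b') - tmul (iter_cop Delta n b) (iter_cop Delta n b'))
      \<in> ch_rel sA sV n"
    by (rule diag_act_tens_rel[OF as iter_cop_mult])
  moreover have "L n b (L n b' (fsingle (as, v))) - L n (b * b') (fsingle (as, v))
      = - diag_act n (as, v) (iter_cop Delta n (b * b') - tmul (iter_cop Delta n b) (iter_cop Delta n b'))"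
    unfolding Lact_Lact_fsingle[OF as] Lact_fsingle[of n "b * b'"]
    by (simp add: fin_linear_diff[OF fin_linear_diag_act] fin_iter_cop fin_tmul)
  ultimately show "L n b (L n b' (fsingle (as, v))) - L n (b * b') (fsingle (as, v)) \<in> ch_rel sA sV n"
    using fs.subspace_neg[OF ch_rel_subspace] by simp
qed

end


section \<open>The subcomplex \<open>J\<close>\<close>

context equivariant_setting
begin

abbreviation J :: "nat \<Rightarrow> ('a list \<times> 'v \<Rightarrow> 'k) set" where
  "J n \<equiv> Jsub sA sV Delta actA actV lA rA n"

abbreviation Lcomm :: "nat \<Rightarrow> 'b \<Rightarrow> ('a list \<times> 'v \<Rightarrow> 'k) \<Rightarrow> ('a list \<times> 'v \<Rightarrow> 'k)" where
  "Lcomm n b \<equiv> commL Delta actA actV lA rA n b"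

lemma Jsub_subspace: "fs.subspace (J n)"
  unfolding Jsub_def by (rule fs.subspace_span)

lemma ch_rel_Jsub: "x \<in> ch_rel sA sV n \<Longrightarrow> x \<in> J n"
  unfolding Jsub_def by (rule fs.span_base) (rule UnI2)

lemma commL_Jsub: "f \<in> ch_rep (Suc n) \<Longrightarrow> Lcomm n b f \<in> J n"
  unfolding Jsub_def by (rule fs.span_base) blast

lemma commL_eq: "Lcomm n b f = L n b (\<delta> (Suc n) (Suc n) f) - \<delta> (Suc n) (Suc n) (L (Suc n) b f)"
  by (simp add: commL_def)

lemma fin_linear_commL: "fin_linear (Lcomm n b)"
  unfolding commL_def[abs_def] Suc_eq_plus1[symmetric]
  by (intro fin_linear_diff_op fin_linear_comp[OF fin_linear_Lact fin_linear_face]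
      fin_linear_comp[OF fin_linear_face fin_linear_Lact])

lemma dCH_Lact_comm_Jsub:
  assumes f: "f \<in> ch_rep (Suc n)"
  shows "dCH lA rA (Suc n) (L (Suc n) b f) - L n b (dCH lA rA (Suc n) f) \<in> J n"
proof -
  have fin: "fin (fsc c (\<delta> (Suc n) j f))" for c j
    by (intro fin_fsc fin_face fin_ch_rep[OF f])
  have "L n b (dCH lA rA (Suc n) f) = (\<Sum>j\<le>Suc n. fsc ((-1)^j) (L n b (\<delta> (Suc n) j f)))"
    unfolding dCH_def
    by (simp add: fin_linear_sum[OF fin_linear_Lact] fin fin_linearD(2)[OF fin_linear_Lact] fin_face
        fin_ch_rep[OF f] del: sum.atMost_Suc)
  then have eq: "dCH lA rA (Suc n) (L (Suc n) b f) - L n b (dCH lA rA (Suc n) f)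
      = (\<Sum>j\<le>Suc n. fsc ((-1)^j) (\<delta> (Suc n) j (L (Suc n) b f) - L n b (\<delta> (Suc n) j f)))"
    unfolding dCH_def by (simp add: fs.scale_right_diff_distrib sum_subtractf del: sum.atMost_Suc)
  have mem: "\<delta> (Suc n) j (L (Suc n) b f) - L n b (\<delta> (Suc n) j f) \<in> J n" if "j \<le> Suc n" for j
  proof (cases "j \<le> n")
    case True
    then show ?thesis by (intro ch_rel_Jsub face_Lact_comm f)
  next
    case False
    then have "j = Suc n" using that by simp
    then show ?thesis
      using fs.subspace_neg[OF Jsub_subspace commL_Jsub[OF f]] by (simp add: commL_eq)
  qed
  show ?thesis
    unfolding eq by (intro fs.subspace_sum[OF Jsub_subspace] fs.subspace_scale[OF Jsub_subspace] mem) simp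
qed

lemma face_commL_Jsub_inner:
  assumes f: "f \<in> ch_rep (Suc (Suc n))" and j: "j \<le> n"
  shows "\<delta> (Suc n) j (Lcomm (Suc n) b f) \<in> J n"
proof -
  let ?m = "Suc (Suc n)"
  let ?h = "\<delta> ?m (Suc j) f"
  have fin: "fin f" by (rule fin_ch_rep[OF f])
  have h: "?h \<in> ch_rep (Suc n)" using face_ch_rep[OF f] by simp
  have g: "\<delta> ?m ?m f \<in> ch_rep (Suc n)" using face_ch_rep[OF f] by simp
  define X1 where "X1 = \<delta> (Suc n) j (L (Suc n) b (\<delta> ?m ?m f)) - L n b (\<delta> (Suc n) j (\<delta> ?m ?m f))"
  define X2 where "X2 = \<delta> ?m (Suc j) (L ?m b f) - L (Suc n) b ?h"
  have X1: "X1 \<in> ch_rel sA sV n"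
    unfolding X1_def by (rule face_Lact_comm[OF g j])
  have "X2 \<in> ch_rel sA sV (Suc n)"
    unfolding X2_def using face_Lact_comm[OF f, of "Suc j" b] j by simp
  then have X2: "\<delta> (Suc n) (Suc n) X2 \<in> ch_rel sA sV n"
    using face_ch_rel by fastforce
  have "\<delta> (Suc n) j (Lcomm (Suc n) b f)
      = \<delta> (Suc n) j (L (Suc n) b (\<delta> ?m ?m f)) - \<delta> (Suc n) j (\<delta> ?m ?m (L ?m b f))"
    unfolding commL_eq by (simp add: fin_linear_diff[OF fin_linear_face] fin_Lact fin_face fin)
  also have "\<dots> = X1 + L n b (\<delta> (Suc n) (Suc n) ?h) - \<delta> (Suc n) (Suc n) (\<delta> ?m (Suc j) (L ?m b f))"
    by (simp add: X1_def face_face_last[OF f j] face_face_last[OF Lact_ch_rep[OF f] j])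
  also have "\<dots> = X1 - \<delta> (Suc n) (Suc n) X2 + Lcomm n b ?h"
    by (simp add: X2_def commL_eq fin_linear_diff[OF fin_linear_face] fin_Lact fin_face fin)
  also have "\<dots> \<in> J n"
    by (intro fs.subspace_add[OF Jsub_subspace] fs.subspace_diff[OF Jsub_subspace] ch_rel_Jsub X1 X2
        commL_Jsub[OF h])
  finally show ?thesis .
qed

lemma face_commL_Jsub_last:
  assumes f: "f \<in> ch_rep (Suc (Suc n))"
  shows "\<delta> (Suc n) (Suc n) (Lcomm (Suc n) b f) \<in> J n"
proof -
  let ?m = "Suc (Suc n)"
  let ?g = "\<delta> ?m ?m f" and ?h = "\<delta> ?m 0 f"
  have fin: "fin f" by (rule fin_ch_rep[OF f])
  have g: "?g \<in> ch_rep (Suc n)" and h: "?h \<in> ch_rep (Suc n)" using face_ch_rep[OF f] by simp_all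
  define X where "X = \<delta> ?m 0 (L ?m b f) - L (Suc n) b ?h"
  have "X \<in> ch_rel sA sV (Suc n)"
    unfolding X_def using face_Lact_comm[OF f, of 0 b] by simp
  then have X: "\<delta> (Suc n) (Suc n) X \<in> ch_rel sA sV n"
    using face_ch_rel by fastforce
  have "\<delta> (Suc n) (Suc n) (Lcomm (Suc n) b f)
      = \<delta> (Suc n) (Suc n) (L (Suc n) b ?g) - \<delta> (Suc n) (Suc n) (\<delta> ?m 0 (L ?m b f))"
    unfolding commL_eq
    by (simp add: fin_linear_diff[OF fin_linear_face] fin_Lact fin_face fin
        face_last_face_last[OF Lact_ch_rep[OF f]])
  also have "\<dots> = - Lcomm n b ?g - \<delta> (Suc n) (Suc n) X + Lcomm n b ?h"
    by (simp add: X_def commL_eq fin_linear_diff[OF fin_linear_face] fin_Lact fin_face fin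
        face_last_face_last[OF f])
  also have "\<dots> \<in> J n"
    by (intro fs.subspace_add[OF Jsub_subspace] fs.subspace_diff[OF Jsub_subspace]
        fs.subspace_neg[OF Jsub_subspace] ch_rel_Jsub X commL_Jsub g h)
  finally show ?thesis .
qed

lemma dCH_Jsub:
  assumes "x \<in> J (Suc n)"
  shows "dCH lA rA (Suc n) x \<in> J n"
proof -
  have gen: "fin g \<and> dCH lA rA (Suc n) g \<in> J n"
    if "g \<in> {Lcomm (Suc n) b f | b f. f \<in> ch_rep (Suc (Suc n))} \<union> ch_rel sA sV (Suc n)" for g
    using that
  proof
    assume "g \<in> {Lcomm (Suc n) b f | b f. f \<in> ch_rep (Suc (Suc n))}"
    then obtain b f where g: "g = Lcomm (Suc n) b f" and f: "f \<in> ch_rep (Suc (Suc n))" by blast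
    have mem: "\<delta> (Suc n) j g \<in> J n" if "j \<le> Suc n" for j
      using that face_commL_Jsub_inner[OF f] face_commL_Jsub_last[OF f] g
      by (cases "j = Suc n") auto
    have "dCH lA rA (Suc n) g \<in> J n"
      unfolding dCH_def by (intro fs.subspace_sum[OF Jsub_subspace] fs.subspace_scale[OF Jsub_subspace] mem) simp
    then show ?thesis
      using fin_linearD(3)[OF fin_linear_commL fin_ch_rep[OF f]] g by simp
  next
    assume g: "g \<in> ch_rel sA sV (Suc n)"
    have "\<delta> (Suc n) j g \<in> J n" for j
      using face_ch_rel[OF g, of j] by (simp add: ch_rel_Jsub)
    then have "dCH lA rA (Suc n) g \<in> J n"
      unfolding dCH_def by (intro fs.subspace_sum[OF Jsub_subspace] fs.subspace_scale[OF Jsub_subspace])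
    then show ?thesis
      using fin_ch_rel[OF g] by simp
  qed
  have "x \<in> fs.span ({Lcomm (Suc n) b f | b f. f \<in> ch_rep (Suc (Suc n))} \<union> ch_rel sA sV (Suc n))"
    using assms by (simp only: Jsub_def)
  from fin_linear_span_image[OF fin_linear_dCH Jsub_subspace gen this] show ?thesis ..
qed

lemma Lact_commL_Jsub:
  assumes f: "f \<in> ch_rep (Suc n)"
  shows "L n b (Lcomm n b' f) \<in> J n"
proof -
  let ?g = "\<delta> (Suc n) (Suc n) f"
  have fin: "fin f" by (rule fin_ch_rep[OF f])
  have g: "?g \<in> ch_rep n" using face_ch_rep[OF f] by simp
  define Y1 where "Y1 = L n b (L n b' ?g) - L n (b * b') ?g"
  define Y2 where "Y2 = L (Suc n) b (L (Suc n) b' f) - L (Suc n) (b * b') f"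
  have Y1: "Y1 \<in> ch_rel sA sV n"
    unfolding Y1_def by (rule Lact_Lact[OF g])
  have "Y2 \<in> ch_rel sA sV (Suc n)"
    unfolding Y2_def by (rule Lact_Lact[OF f])
  then have Y2: "\<delta> (Suc n) (Suc n) Y2 \<in> ch_rel sA sV n"
    using face_ch_rel by fastforce
  have "L n b (Lcomm n b' f) = L n b (L n b' ?g) - L n b (\<delta> (Suc n) (Suc n) (L (Suc n) b' f))"
    unfolding commL_eq by (simp add: fin_linear_diff[OF fin_linear_Lact] fin_Lact fin_face fin)
  also have "\<dots> = Y1 - Lcomm n b (L (Suc n) b' f) - \<delta> (Suc n) (Suc n) Y2 + Lcomm n (b * b') f"
    by (simp add: Y1_def Y2_def commL_eq fin_linear_diff[OF fin_linear_face] fin_Lact fin)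
  also have "\<dots> \<in> J n"
    by (intro fs.subspace_add[OF Jsub_subspace] fs.subspace_diff[OF Jsub_subspace] ch_rel_Jsub Y1 Y2
        commL_Jsub f Lact_ch_rep)
  finally show ?thesis .
qed

lemma Lact_Jsub:
  assumes "x \<in> J n"
  shows "L n b x \<in> J n"
proof -
  have gen: "fin g \<and> L n b g \<in> J n"
    if "g \<in> {Lcomm n b' f | b' f. f \<in> ch_rep (Suc n)} \<union> ch_rel sA sV n" for g
    using that fin_ch_rel Lact_ch_rel ch_rel_Jsub Lact_commL_Jsub
      fin_linearD(3)[OF fin_linear_commL fin_ch_rep]
    by blast
  have "x \<in> fs.span ({Lcomm n b' f | b' f. f \<in> ch_rep (Suc n)} \<union> ch_rel sA sV n)"
    using assms by (simp only: Jsub_def)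
  from fin_linear_span_image[OF fin_linear_Lact Jsub_subspace gen this] show ?thesis ..
qed

end

theorem proposition2p4:
  fixes sB :: "'k::field \<Rightarrow> 'b::ring_1 \<Rightarrow> 'b"
    and Delta :: "'b \<Rightarrow> 'b list \<Rightarrow> 'k"
    and eps :: "'b \<Rightarrow> 'k"
    and sA :: "'k \<Rightarrow> 'a::ring \<Rightarrow> 'a"
    and actA :: "'b \<Rightarrow> 'a \<Rightarrow> 'a"
    and sV :: "'k \<Rightarrow> 'v::ab_group_add \<Rightarrow> 'v"
    and lA :: "'a \<Rightarrow> 'v \<Rightarrow> 'v"
    and rA :: "'v \<Rightarrow> 'a \<Rightarrow> 'v"
    and actV :: "'b \<Rightarrow> 'v \<Rightarrow> 'v"
  assumes "bialgebra sB Delta eps"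
    and "module_algebra sB Delta sA actA"
    and "equivariant_bimodule sB Delta sA actA sV lA rA actV"
  defines "J \<equiv> Jsub sA sV Delta actA actV lA rA"
  shows "(\<forall>n. \<forall>x\<in>J (Suc n). dCH lA rA (Suc n) x \<in> J n)
       \<and> (\<forall>n b. \<forall>x\<in>J n. Lact Delta actA actV n b x \<in> J n)
       \<and> (\<forall>n b. \<forall>f\<in>ch_rep (Suc n).
            dCH lA rA (Suc n) (Lact Delta actA actV (Suc n) b f)
            - Lact Delta actA actV n b (dCH lA rA (Suc n) f) \<in> J n)"
proof -
  interpret equivariant_setting sB Delta eps sA actA sV lA rA actV
    using assms(1-3) by unfold_locales
  show ?thesis
    unfolding J_def using dCH_Jsub Lact_Jsub dCH_Lact_comm_Jsub by blast
qed

end
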